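(* Let $d\ge1$, $p\geq1$, $\alpha>0$, and let $\mu\in\mathcal P(\mathbb R^d)$ satisfy $\int_{\mathbb R^d}|x|^p\big(\log(1+|x|)\big)^\alpha\,\mu(dx)<\infty$; let $X\sim\mu$. Fix $\varepsilon>0$ and set $\gamma_\varepsilon=\frac{p}{2(p+\varepsilon)(p+d)}$, $C=\max\{2^{p-1}C_{p,d}^p,2^{3p-2}\}$ with $C_{p,d}=2^{3/2}\big(\Gamma(\frac{p+d}{2})/\Gamma(\frac{d}{2})\big)^{1/p}$. Then, as $N\to\infty$, \[ \mathbb E\big[{\mathcal W}_p^p(\mu_N,\mu)\big] \ \leq \ C\,\frac{1 + \mathbb E\big[|X|^p\big(\log(1+|X|)\big)^\alpha\big]}{(\log(1+N^{\gamma_\varepsilon}))^\alpha} + o\bigg(\frac{1}{(\log(1+N^{\gamma_\varepsilon}))^\alpha}\bigg). \]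
   Context: $\mathcal P(\mathbb R^d)$ is the set of Borel probability measures on $\mathbb R^d$. ${\mathcal W}_p$ is the $p$-Wasserstein distance ${\mathcal W}_p(\mu,\nu)=\inf_{\pi\in\Pi(\mu,\nu)}\big(\int|x-y|^p\,\pi(dx,dy)\big)^{1/p}$. $(X_k)_{k\ge1}$ is an i.i.d. sequence of $\mu$-distributed random variables and $\mu_N=\frac1N\sum_{k=1}^N\delta_{X_k}$. $\Gamma$ is the gamma function. *)

theory Defs
  imports "HOL-Probability.Probability"
begin

definition couplings :: "'a::euclidean_space measure \<Rightarrow> 'a measure \<Rightarrow> ('a \<times> 'a) measure set" where
  "couplings \<mu> \<nu> = {\<pi>. sets \<pi> = sets (borel \<Otimes>\<^sub>M borel) \<and> prob_space \<pi> \<and>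
      distr \<pi> borel fst = \<mu> \<and> distr \<pi> borel snd = \<nu>}"

definition wasserstein_pow :: "real \<Rightarrow> 'a::euclidean_space measure \<Rightarrow> 'a measure \<Rightarrow> ennreal" where
  "wasserstein_pow p \<mu> \<nu> =
     (INF \<pi>\<in>couplings \<mu> \<nu>. \<integral>\<^sup>+ z. ennreal (norm (fst z - snd z) powr p) \<partial>\<pi>)"

definition empirical_measure :: "(nat \<Rightarrow> 'a::euclidean_space) \<Rightarrow> nat \<Rightarrow> 'a measure" where
  "empirical_measure x N = distr (uniform_measure (count_space UNIV) {1..N}) borel x"

end

theory Submission
  imports Defs "HOL-Real_Asymp.Real_Asymp"
begin

text \<open>Cut the cube \<open>[-R, R)\<^sup>d\<close> into small cubes \<open>A\<^sub>i\<close> of side \<open>1/n\<close>. Two probability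
  measures \<open>P\<close> and \<open>Q\<close> are coupled by transporting the common mass \<open>min (P A\<^sub>i) (Q A\<^sub>i)\<close>
  inside each cube, at cost at most \<open>(d/n)\<^sup>p\<close>, and by coupling the remaining mass
  independently, at cost at most \<open>2\<^sup>p\<^sup>-\<^sup>1 (|x|\<^sup>p + |y|\<^sup>p)\<close>. Inside the cube the remaining
  mass is at most \<open>\<Sum>\<^sub>i |P A\<^sub>i - Q A\<^sub>i|\<close>, and for \<open>P = \<mu>\<^sub>N\<close>, \<open>Q = \<mu>\<close> each summand has
  expectation at most \<open>1 / sqrt N\<close> by a second-moment bound. Outside the cube the cost is at
  most \<open>2\<^sup>p\<close> times the tail moment \<open>\<integral>\<^bsub>|x| \<ge> R\<^esub> |x|\<^sup>p d\<mu> \<le> m / log (1 + R)\<^sup>\<alpha>\<close>.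
  Taking \<open>R = N\<^sup>\<gamma>\<close> and \<open>n\<close> a small power of \<open>N\<close>, all grid terms decay polynomially in \<open>N\<close>;
  only the tail term survives, with constant \<open>2\<^sup>p \<le> C\<close>.\<close>

lemma powr_add_le_two_powr:
  fixes a b p :: real
  assumes "a \<ge> 0" "b \<ge> 0" "p \<ge> 1"
  shows "(a + b) powr p \<le> 2 powr (p - 1) * (a powr p + b powr p)"
proof (cases "a = 0 \<or> b = 0")
  case True
  have "1 \<le> 2 powr (p - 1)" using assms by (simp add: ge_one_powr_ge_zero)
  then show ?thesis using True assms
    by (auto simp: mult_le_cancel_right1 intro: mult_right_mono[of 1, simplified])
next
  case False
  hence "a > 0" "b > 0" using assms by auto
  hence "((1/2) * a + (1 - 1/2) * b) powr p \<le> (1/2) * a powr p + (1 - 1/2) * b powr p"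
    using convex_onD[OF powr_convex[OF assms(3)], of "1/2" a b] by auto
  hence midpoint: "((a + b) / 2) powr p \<le> (a powr p + b powr p) / 2" by (simp add: field_simps)
  have "(a + b) powr p = (2 * ((a + b) / 2)) powr p" by (simp only: mult_2 field_sum_of_halves)
  also have "\<dots> = 2 powr p * ((a + b) / 2) powr p" by (rule powr_mult)
  also have "\<dots> \<le> 2 powr p * ((a powr p + b powr p) / 2)"
    using midpoint by (intro mult_left_mono) auto
  also have "\<dots> = 2 powr (p - 1) * (a powr p + b powr p)"
    by (simp add: powr_diff field_simps)
  finally show ?thesis .
qed

lemma nn_integral_pair_measure_mult:
  assumes "sigma_finite_measure Q"
    and f: "f \<in> borel_measurable P" and g: "g \<in> borel_measurable Q"
  shows "(\<integral>\<^sup>+ z. f (fst z) * g (snd z) \<partial>(P \<Otimes>\<^sub>M Q)) = (\<integral>\<^sup>+ x. f x \<partial>P) * (\<integral>\<^sup>+ y. g y \<partial>Q)"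
proof -
  interpret Q: sigma_finite_measure Q by fact
  have "(\<integral>\<^sup>+ z. f (fst z) * g (snd z) \<partial>(P \<Otimes>\<^sub>M Q)) = (\<integral>\<^sup>+ x. \<integral>\<^sup>+ y. f x * g y \<partial>Q \<partial>P)"
    by (subst Q.nn_integral_fst[symmetric]) (use f g in auto)
  also have "\<dots> = (\<integral>\<^sup>+ x. f x * (\<integral>\<^sup>+ y. g y \<partial>Q) \<partial>P)"
    by (intro nn_integral_cong nn_integral_cmult g)
  also have "\<dots> = (\<integral>\<^sup>+ x. f x \<partial>P) * (\<integral>\<^sup>+ y. g y \<partial>Q)"
    by (intro nn_integral_multc f)
  finally show ?thesis .
qed

lemma nn_integral_sum_cmult_indicator:
  assumes "finite_measure M" and "\<And>i. i \<in> I \<Longrightarrow> B i \<in> sets M" and "\<And>i. i \<in> I \<Longrightarrow> c i \<ge> 0"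
  shows "(\<integral>\<^sup>+ x. ennreal (\<Sum>i\<in>I. c i * indicator (B i) x) \<partial>M) = ennreal (\<Sum>i\<in>I. c i * measure M (B i))"
proof -
  interpret finite_measure M by fact
  have "(\<integral>\<^sup>+ x. ennreal (\<Sum>i\<in>I. c i * indicator (B i) x) \<partial>M)
      = (\<integral>\<^sup>+ x. (\<Sum>i\<in>I. ennreal (c i) * indicator (B i) x) \<partial>M)"
    by (intro nn_integral_cong)
       (use assms(3) in \<open>auto simp: sum_ennreal[symmetric] ennreal_mult ennreal_indicator\<close>)
  also have "\<dots> = (\<Sum>i\<in>I. ennreal (c i * measure M (B i)))"
    by (subst nn_integral_sum)
       (use assms(2,3) in \<open>auto simp: nn_integral_cmult_indicator emeasure_eq_measure ennreal_mult
         intro!: sum.cong\<close>)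
  also have "\<dots> = ennreal (\<Sum>i\<in>I. c i * measure M (B i))"
    by (intro sum_ennreal) (use assms(3) in auto)
  finally show ?thesis .
qed

lemma sets_empirical_measure [simp]: "sets (empirical_measure x N) = sets borel"
  by (simp add: empirical_measure_def)

lemma space_empirical_measure [simp]: "space (empirical_measure x N) = UNIV"
  by (simp add: empirical_measure_def)

lemma prob_space_empirical_measure: "N \<ge> 1 \<Longrightarrow> prob_space (empirical_measure x N)"
  unfolding empirical_measure_def
  by (rule prob_space.prob_space_distr, rule prob_space_uniform_measure) auto

lemma nn_integral_empirical_measure:
  assumes "N \<ge> 1" and "f \<in> borel_measurable borel"
  shows "(\<integral>\<^sup>+ y. f y \<partial>empirical_measure x N) = (\<Sum>k\<in>{1..N}. f (x k)) / of_nat N"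
proof -
  have "(\<integral>\<^sup>+ y. f y \<partial>empirical_measure x N)
      = (\<integral>\<^sup>+ k. f (x k) \<partial>uniform_measure (count_space UNIV) {1..N})"
    unfolding empirical_measure_def by (subst nn_integral_distr) (use assms in auto)
  also have "\<dots> = (\<integral>\<^sup>+ k. f (x k) * indicator {1..N} k \<partial>count_space UNIV) / of_nat N"
    by (subst nn_integral_uniform_measure) auto
  also have "\<dots> = (\<Sum>k\<in>{1..N}. f (x k)) / of_nat N"
    by (subst nn_integral_indicator_finite) auto
  finally show ?thesis .
qed

lemma measure_empirical_measure:
  assumes "N \<ge> 1" and "S \<in> sets borel"
  shows "measure (empirical_measure x N) S = (\<Sum>k\<in>{1..N}. indicator S (x k)) / real N"
proof -
  interpret prob_space "empirical_measure x N" using prob_space_empirical_measure[OF assms(1)] .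
  have nonneg: "(\<Sum>k\<in>{1..N}. indicator S (x k) :: real) / real N \<ge> 0"
    by (simp add: sum_nonneg)
  have "ennreal (measure (empirical_measure x N) S) = (\<integral>\<^sup>+ y. indicator S y \<partial>empirical_measure x N)"
    using assms(2) by (simp add: emeasure_eq_measure)
  also have "\<dots> = (\<Sum>k\<in>{1..N}. indicator S (x k)) / of_nat N"
    by (rule nn_integral_empirical_measure) (use assms in auto)
  also have "\<dots> = ennreal (\<Sum>k\<in>{1..N}. indicator S (x k)) / ennreal (real N)"
    by (simp add: sum_ennreal[symmetric] ennreal_indicator ennreal_of_nat_eq_real_of_nat)
  also have "\<dots> = ennreal ((\<Sum>k\<in>{1..N}. indicator S (x k)) / real N)"
    using assms(1) by (intro divide_ennreal) (auto intro!: sum_nonneg)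
  finally show ?thesis using nonneg by simp
qed

section \<open>A coupling adapted to a finite family of cells\<close>

locale cell_coupling =
  fixes P Q :: "'a::euclidean_space measure" and I :: "'i set" and A :: "'i \<Rightarrow> 'a set"
  assumes prob_P: "prob_space P" and sets_P: "sets P = sets borel"
    and prob_Q: "prob_space Q" and sets_Q: "sets Q = sets borel"
    and finite_I: "finite I" and cell_borel [measurable]: "\<And>i. A i \<in> sets borel"
    and disjoint_cells: "disjoint_family_on A I"
begin

definition outside :: "'a set" where
  "outside = - (\<Union>i\<in>I. A i)"

definition residual :: "('i \<Rightarrow> real) \<Rightarrow> 'a \<Rightarrow> real" where
  "residual c x = (\<Sum>i\<in>I. c i * indicator (A i) x) + indicator outside x"

definition residual_mass :: "'a measure \<Rightarrow> ('i \<Rightarrow> real) \<Rightarrow> 'a set \<Rightarrow> real" where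
  "residual_mass R c S = (\<Sum>i\<in>I. c i * measure R (A i \<inter> S)) + measure R (outside \<inter> S)"

lemma outside_borel [measurable]: "outside \<in> sets borel"
proof -
  have "(\<Union>i\<in>I. A i) \<in> sets borel" using finite_I by (auto intro: sets.finite_UN)
  then show ?thesis by (simp add: outside_def Compl_eq_Diff_UNIV sets.Diff)
qed

lemma residual_nonneg: "(\<And>i. c i \<ge> 0) \<Longrightarrow> residual c x \<ge> 0"
  unfolding residual_def by (intro add_nonneg_nonneg sum_nonneg mult_nonneg_nonneg) auto

lemma residual_mass_nonneg: "(\<And>i. c i \<ge> 0) \<Longrightarrow> residual_mass R c S \<ge> 0"
  unfolding residual_mass_def by (intro add_nonneg_nonneg sum_nonneg mult_nonneg_nonneg) auto

lemma borel_measurable_residual [measurable]: "residual c \<in> borel_measurable borel"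
  unfolding residual_def by measurable

lemma measure_eq_sum_cells:
  assumes "finite_measure R" "sets R = sets borel" "S \<in> sets borel"
  shows "measure R S = (\<Sum>i\<in>I. measure R (A i \<inter> S)) + measure R (outside \<inter> S)"
proof -
  interpret finite_measure R by fact
  have cells: "(\<lambda>i. A i \<inter> S) ` I \<subseteq> sets R"
    unfolding assms(2) using assms(3) by auto
  have union: "(\<Union>i\<in>I. A i \<inter> S) \<in> sets R" using cells finite_I by blast
  have "measure R (\<Union>i\<in>I. A i \<inter> S) = (\<Sum>i\<in>I. measure R (A i \<inter> S))"
  proof (rule finite_measure_finite_Union[OF finite_I cells])
    show "disjoint_family_on (\<lambda>i. A i \<inter> S) I"
      using disjoint_cells unfolding disjoint_family_on_def by blast
  qed
  moreover have "measure R (outside \<inter> S) = measure R S - measure R (\<Union>i\<in>I. A i \<inter> S)"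
  proof -
    have "outside \<inter> S = S - (\<Union>i\<in>I. A i \<inter> S)" by (auto simp: outside_def)
    then show ?thesis using union assms(3) by (simp add: finite_measure_Diff assms(2))
  qed
  ultimately show ?thesis by simp
qed

lemma residual_mass_le_UNIV:
  assumes "finite_measure R" "sets R = sets borel" "\<And>i. c i \<ge> 0" "S \<in> sets borel"
  shows "residual_mass R c S \<le> residual_mass R c UNIV"
proof -
  interpret finite_measure R by fact
  show ?thesis
    unfolding residual_mass_def using assms(3,4)
    by (intro add_mono sum_mono mult_left_mono finite_measure_mono) (auto simp: assms(2))
qed

lemma nn_integral_residual_indicator:
  assumes "finite_measure R" "sets R = sets borel" "\<And>i. c i \<ge> 0" "S \<in> sets borel"
  shows "(\<integral>\<^sup>+ x. ennreal (residual c x * indicator S x) \<partial>R) = ennreal (residual_mass R c S)"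
proof -
  interpret finite_measure R by fact
  have [measurable]: "S \<in> sets borel" by fact
  have "(\<integral>\<^sup>+ x. ennreal (residual c x * indicator S x) \<partial>R)
     = (\<integral>\<^sup>+ x. ennreal (\<Sum>i\<in>I. c i * indicator (A i \<inter> S) x) + indicator (outside \<inter> S) x \<partial>R)"
  proof (intro nn_integral_cong)
    fix x
    have "residual c x * indicator S x
        = (\<Sum>i\<in>I. c i * indicator (A i \<inter> S) x) + indicator (outside \<inter> S) x"
      by (simp add: residual_def indicator_inter_arith sum_distrib_left sum_distrib_right algebra_simps)
    then show "ennreal (residual c x * indicator S x)
        = ennreal (\<Sum>i\<in>I. c i * indicator (A i \<inter> S) x) + indicator (outside \<inter> S) x"
      using assms(3) by (simp add: ennreal_plus sum_nonneg ennreal_indicator)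
  qed
  also have "\<dots> = ennreal (\<Sum>i\<in>I. c i * measure R (A i \<inter> S)) + ennreal (measure R (outside \<inter> S))"
    using assms(3,4)
    by (subst nn_integral_add)
       (auto simp: measurable_cong_sets[OF assms(2) refl] nn_integral_sum_cmult_indicator[OF assms(1)]
         emeasure_eq_measure assms(2))
  also have "\<dots> = ennreal (residual_mass R c S)"
    unfolding residual_mass_def using assms(3)
    by (intro ennreal_plus[symmetric] sum_nonneg mult_nonneg_nonneg) auto
  finally show ?thesis .
qed

lemma nn_integral_residual_norm_powr_le:
  assumes "finite_measure R" "sets R = sets borel" "\<And>i. c i \<ge> 0" "p \<ge> 0" "\<rho> \<ge> 0"
    and bounded: "\<And>i x. i \<in> I \<Longrightarrow> x \<in> A i \<Longrightarrow> norm x \<le> \<rho>"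
  shows "(\<integral>\<^sup>+ x. ennreal (residual c x * norm x powr p) \<partial>R)
     \<le> ennreal (\<rho> powr p * (\<Sum>i\<in>I. c i * measure R (A i)))
       + (\<integral>\<^sup>+ x. ennreal (indicator outside x * norm x powr p) \<partial>R)"
proof -
  have pointwise: "residual c x * norm x powr p
      \<le> (\<Sum>i\<in>I. c i * \<rho> powr p * indicator (A i) x) + indicator outside x * norm x powr p" for x
    unfolding residual_def distrib_right sum_distrib_right
  proof (intro add_mono sum_mono order_refl)
    fix i assume i: "i \<in> I"
    show "c i * indicator (A i) x * norm x powr p \<le> c i * \<rho> powr p * indicator (A i) x"
    proof (cases "x \<in> A i")
      case True
      then have "norm x powr p \<le> \<rho> powr p"
        using bounded[OF i] assms(4) by (intro powr_mono2) auto
      then show ?thesis using True assms(3)[of i] by (simp add: mult_left_mono)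
    qed simp
  qed
  have "(\<integral>\<^sup>+ x. ennreal (residual c x * norm x powr p) \<partial>R)
      \<le> (\<integral>\<^sup>+ x. ennreal (\<Sum>i\<in>I. c i * \<rho> powr p * indicator (A i) x)
            + ennreal (indicator outside x * norm x powr p) \<partial>R)"
  proof (intro nn_integral_mono)
    fix x
    have "(\<Sum>i\<in>I. c i * \<rho> powr p * indicator (A i) x) \<ge> 0"
      using assms(3) by (intro sum_nonneg) simp
    then show "ennreal (residual c x * norm x powr p)
        \<le> ennreal (\<Sum>i\<in>I. c i * \<rho> powr p * indicator (A i) x)
          + ennreal (indicator outside x * norm x powr p)"
      using ennreal_leI[OF pointwise[of x]] by simp
  qed
  also have "\<dots> = ennreal (\<Sum>i\<in>I. c i * \<rho> powr p * measure R (A i))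
      + (\<integral>\<^sup>+ x. ennreal (indicator outside x * norm x powr p) \<partial>R)"
    using assms(3)
    by (subst nn_integral_add)
       (auto simp: measurable_cong_sets[OF assms(2) refl] nn_integral_sum_cmult_indicator[OF assms(1)]
         assms(2))
  finally show ?thesis by (simp add: sum_distrib_left ac_simps)
qed

lemma measure_eq_weighted_cells_plus_residual_mass:
  assumes "finite_measure R" "sets R = sets borel" "\<And>i. c i \<ge> 0" "S \<in> sets borel"
    and complement: "\<And>i. i \<in> I \<Longrightarrow> measure R (A i) > 0 \<Longrightarrow> v i + c i = 1"
  shows "(\<Sum>i\<in>I. v i * measure R (A i \<inter> S)) + residual_mass R c S = measure R S"
proof -
  interpret finite_measure R by fact
  have "v i * measure R (A i \<inter> S) + c i * measure R (A i \<inter> S) = measure R (A i \<inter> S)"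
    if "i \<in> I" for i
  proof (cases "measure R (A i) > 0")
    case False
    have "measure R (A i \<inter> S) \<le> measure R (A i)"
      using assms(4) by (intro finite_measure_mono) (auto simp: assms(2))
    then have "measure R (A i \<inter> S) = 0"
      using False measure_nonneg[of R "A i \<inter> S"] by linarith
    then show ?thesis by simp
  qed (use complement[OF that] in \<open>simp add: distrib_right[symmetric]\<close>)
  then show ?thesis
    using measure_eq_sum_cells[OF assms(1,2,4)]
    by (simp add: residual_mass_def sum.distrib[symmetric])
qed

definition mass_P :: "'i \<Rightarrow> real" where
  "mass_P i = measure P (A i)"

definition mass_Q :: "'i \<Rightarrow> real" where
  "mass_Q i = measure Q (A i)"

definition shared :: "'i \<Rightarrow> real" where
  "shared i = min (mass_P i) (mass_Q i)"

definition deficit :: real where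
  "deficit = 1 - (\<Sum>i\<in>I. shared i)"

text \<open>On a null cell the division yields \<open>0\<close>, so \<open>excess_P i = 1\<close>; this is harmless since
  the cell carries no mass.\<close>

definition excess_P :: "'i \<Rightarrow> real" where
  "excess_P i = 1 - shared i / mass_P i"

definition excess_Q :: "'i \<Rightarrow> real" where
  "excess_Q i = 1 - shared i / mass_Q i"

definition weight :: "'i \<Rightarrow> real" where
  "weight i = shared i / (mass_P i * mass_Q i)"

text \<open>Density of the coupling with respect to \<open>P \<Otimes>\<^sub>M Q\<close>: the mass \<open>shared i\<close> is coupled
  independently inside the cell \<open>A i\<close>, and the unmatched parts \<open>residual excess_P \<cdot> P\<close> and
  \<open>residual excess_Q \<cdot> Q\<close>, both of total mass \<open>deficit\<close>, are coupled independently.\<close>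

definition kernel :: "'a \<Rightarrow> 'a \<Rightarrow> real" where
  "kernel x y = (\<Sum>i\<in>I. weight i * (indicator (A i) x * indicator (A i) y))
     + residual excess_P x * residual excess_Q y / deficit"

definition coupling :: "('a \<times> 'a) measure" where
  "coupling = density (P \<Otimes>\<^sub>M Q) (\<lambda>z. ennreal (kernel (fst z) (snd z)))"

lemma finite_measure_P: "finite_measure P" and finite_measure_Q: "finite_measure Q"
  using prob_P prob_Q by (simp_all add: prob_space_def)

lemma measurable_P [simp]: "measurable P M = measurable borel M"
  and measurable_Q [simp]: "measurable Q M = measurable borel M"
  by (simp_all add: measurable_cong_sets[OF sets_P refl] measurable_cong_sets[OF sets_Q refl])

lemma sets_pair_PQ: "sets (P \<Otimes>\<^sub>M Q) = sets (borel \<Otimes>\<^sub>M borel)"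
  by (rule sets_pair_measure_cong[OF sets_P sets_Q])

lemma measurable_pair_PQ [simp]: "measurable (P \<Otimes>\<^sub>M Q) M = measurable (borel \<Otimes>\<^sub>M borel) M"
  by (rule measurable_cong_sets[OF sets_pair_PQ refl])

lemma sets_coupling: "sets coupling = sets (borel \<Otimes>\<^sub>M borel)"
  by (simp add: coupling_def sets_pair_PQ)

lemma space_coupling [simp]: "space coupling = UNIV"
  by (simp add: coupling_def space_pair_measure sets_eq_imp_space_eq[OF sets_P]
      sets_eq_imp_space_eq[OF sets_Q])

lemma measurable_coupling [simp]: "measurable coupling M = measurable (borel \<Otimes>\<^sub>M borel) M"
  by (rule measurable_cong_sets[OF sets_coupling refl])

lemma shared_le: "shared i \<le> mass_P i" "shared i \<le> mass_Q i"
  by (simp_all add: shared_def)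

lemma coefficients_nonneg:
  "mass_P i \<ge> 0" "mass_Q i \<ge> 0" "shared i \<ge> 0" "excess_P i \<ge> 0" "excess_Q i \<ge> 0"
  "weight i \<ge> 0"
  by (auto simp: mass_P_def mass_Q_def shared_def excess_P_def excess_Q_def weight_def
      divide_le_eq_1 less_le)

lemma excess_P_mult: "excess_P i * mass_P i = mass_P i - shared i"
  and excess_Q_mult: "excess_Q i * mass_Q i = mass_Q i - shared i"
  using coefficients_nonneg[of i] shared_le[of i]
  by (auto simp: excess_P_def excess_Q_def field_simps shared_def)

lemma weight_complements_excess:
  "mass_P i > 0 \<Longrightarrow> weight i * mass_Q i + excess_P i = 1"
  "mass_Q i > 0 \<Longrightarrow> weight i * mass_P i + excess_Q i = 1"
  using coefficients_nonneg[of i]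
  by (auto simp: weight_def excess_P_def excess_Q_def shared_def field_simps)

lemma residual_mass_UNIV:
  "residual_mass P excess_P UNIV = deficit" "residual_mass Q excess_Q UNIV = deficit"
proof -
  have "1 = (\<Sum>i\<in>I. mass_P i) + measure P outside"
    using measure_eq_sum_cells[OF finite_measure_P sets_P, of UNIV]
      prob_space.prob_space[OF prob_P] sets_eq_imp_space_eq[OF sets_P]
    by (simp add: mass_P_def)
  moreover have "1 = (\<Sum>i\<in>I. mass_Q i) + measure Q outside"
    using measure_eq_sum_cells[OF finite_measure_Q sets_Q, of UNIV]
      prob_space.prob_space[OF prob_Q] sets_eq_imp_space_eq[OF sets_Q]
    by (simp add: mass_Q_def)
  ultimately show "residual_mass P excess_P UNIV = deficit" "residual_mass Q excess_Q UNIV = deficit"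
    by (simp_all add: residual_mass_def deficit_def mass_P_def[symmetric] mass_Q_def[symmetric]
        excess_P_mult excess_Q_mult sum_subtractf)
qed

lemma deficit_nonneg: "deficit \<ge> 0"
  using residual_mass_nonneg[of excess_P P UNIV] coefficients_nonneg
  by (simp add: residual_mass_UNIV)

lemma kernel_nonneg: "kernel x y \<ge> 0"
  unfolding kernel_def using coefficients_nonneg deficit_nonneg
  by (intro add_nonneg_nonneg sum_nonneg divide_nonneg_nonneg mult_nonneg_nonneg residual_nonneg)
    auto

lemma borel_measurable_kernel [measurable]:
  "(\<lambda>z. kernel (fst z) (snd z)) \<in> borel_measurable (borel \<Otimes>\<^sub>M borel)"
  unfolding kernel_def by measurable

lemma sigma_finite_Q: "sigma_finite_measure Q"
  using prob_Q by (simp add: prob_space_imp_sigma_finite)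

lemma nn_integral_residual_excess:
  "(\<integral>\<^sup>+ x. ennreal (residual excess_P x) \<partial>P) = ennreal deficit"
  "(\<integral>\<^sup>+ y. ennreal (residual excess_Q y) \<partial>Q) = ennreal deficit"
  using nn_integral_residual_indicator[OF finite_measure_P sets_P, of excess_P UNIV]
    nn_integral_residual_indicator[OF finite_measure_Q sets_Q, of excess_Q UNIV]
    coefficients_nonneg by (simp_all add: residual_mass_UNIV)

lemma sum_weight_mass_le_1: "(\<Sum>i\<in>I. weight i * mass_P i * mass_Q i) \<le> 1"
proof -
  have "weight i * mass_P i * mass_Q i \<le> shared i" for i
    using coefficients_nonneg[of i] by (cases "mass_P i * mass_Q i = 0") (auto simp: weight_def)
  then show ?thesis
    using deficit_nonneg sum_mono[of I "\<lambda>i. weight i * mass_P i * mass_Q i" shared]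
    by (simp add: deficit_def)
qed

lemma nn_integral_cell_product:
  assumes "a \<ge> 0" "S \<in> sets borel" "T \<in> sets borel"
  shows "(\<integral>\<^sup>+ z. ennreal (a * indicator (A i \<inter> S) (fst z)) * ennreal (indicator (A i \<inter> T) (snd z))
      \<partial>(P \<Otimes>\<^sub>M Q))
    = ennreal (a * measure P (A i \<inter> S) * measure Q (A i \<inter> T))"
  using assms
  by (subst nn_integral_pair_measure_mult[OF sigma_finite_Q])
     (auto simp: ennreal_mult' ennreal_indicator nn_integral_cmult_indicator sets_P sets_Q
       finite_measure.emeasure_eq_measure[OF finite_measure_P]
       finite_measure.emeasure_eq_measure[OF finite_measure_Q])

lemma emeasure_coupling_Times:
  assumes [measurable]: "S \<in> sets borel" "T \<in> sets borel"
  shows "emeasure coupling (S \<times> T)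
    = ennreal ((\<Sum>i\<in>I. weight i * measure P (A i \<inter> S) * measure Q (A i \<inter> T))
        + residual_mass P excess_P S * residual_mass Q excess_Q T / deficit)"
proof -
  let ?rP = "residual excess_P" and ?rQ = "residual excess_Q"
  have rP: "?rP x \<ge> 0" and rQ: "?rQ x \<ge> 0" for x
    using coefficients_nonneg by (simp_all add: residual_nonneg)
  have cell_term: "(\<integral>\<^sup>+ z. ennreal (weight i * indicator (A i \<inter> S) (fst z))
        * ennreal (indicator (A i \<inter> T) (snd z)) \<partial>(P \<Otimes>\<^sub>M Q))
      = ennreal (weight i * measure P (A i \<inter> S) * measure Q (A i \<inter> T))" for i
    using coefficients_nonneg[of i] by (intro nn_integral_cell_product) auto
  have residual_term: "(\<integral>\<^sup>+ z. ennreal (?rP (fst z) * indicator S (fst z))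
        * ennreal (?rQ (snd z) * indicator T (snd z)) \<partial>(P \<Otimes>\<^sub>M Q))
      = ennreal (residual_mass P excess_P S * residual_mass Q excess_Q T)"
    using coefficients_nonneg residual_mass_nonneg[of excess_P P S]
      residual_mass_nonneg[of excess_Q Q T]
    by (subst nn_integral_pair_measure_mult[OF sigma_finite_Q])
       (auto simp: nn_integral_residual_indicator finite_measure_P finite_measure_Q sets_P sets_Q
         ennreal_mult)
  have split: "ennreal (kernel x y) * indicator (S \<times> T) (x, y)
    = (\<Sum>i\<in>I. ennreal (weight i * indicator (A i \<inter> S) x) * ennreal (indicator (A i \<inter> T) y))
      + ennreal (1 / deficit)
        * (ennreal (?rP x * indicator S x) * ennreal (?rQ y * indicator T y))" for x y
  proof -
    have "kernel x y * (indicator S x * indicator T y)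
        = (\<Sum>i\<in>I. weight i * indicator (A i \<inter> S) x * indicator (A i \<inter> T) y)
          + 1 / deficit * ((?rP x * indicator S x) * (?rQ y * indicator T y))"
      by (simp add: kernel_def indicator_inter_arith sum_distrib_right sum_distrib_left
          algebra_simps)
    moreover have "ennreal (kernel x y) * indicator (S \<times> T) (x, y)
        = ennreal (kernel x y * (indicator S x * indicator T y))"
      by (auto simp: indicator_def)
    ultimately show ?thesis
      using coefficients_nonneg deficit_nonneg rP[of x] rQ[of y]
      by (simp add: ennreal_mult'[symmetric] ennreal_plus[symmetric] sum_nonneg mult.assoc
          del: ennreal_plus)
  qed
  have "emeasure coupling (S \<times> T)
      = (\<integral>\<^sup>+ z. ennreal (kernel (fst z) (snd z)) * indicator (S \<times> T) z \<partial>(P \<Otimes>\<^sub>M Q))"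
    unfolding coupling_def by (rule emeasure_density) (auto simp: sets_pair_PQ)
  also have "\<dots> = (\<integral>\<^sup>+ z. (\<Sum>i\<in>I. ennreal (weight i * indicator (A i \<inter> S) (fst z))
        * ennreal (indicator (A i \<inter> T) (snd z)))
      + ennreal (1 / deficit) * (ennreal (?rP (fst z) * indicator S (fst z))
        * ennreal (?rQ (snd z) * indicator T (snd z))) \<partial>(P \<Otimes>\<^sub>M Q))"
    by (intro nn_integral_cong) (metis split prod.collapse)
  also have "\<dots> = (\<Sum>i\<in>I. ennreal (weight i * measure P (A i \<inter> S) * measure Q (A i \<inter> T)))
      + ennreal (1 / deficit) * ennreal (residual_mass P excess_P S * residual_mass Q excess_Q T)"
    by (subst nn_integral_add, simp, simp, subst nn_integral_sum, simp, subst nn_integral_cmult)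
       (simp_all add: cell_term residual_term)
  also have "\<dots> = ennreal ((\<Sum>i\<in>I. weight i * measure P (A i \<inter> S) * measure Q (A i \<inter> T))
        + residual_mass P excess_P S * residual_mass Q excess_Q T / deficit)"
    using coefficients_nonneg deficit_nonneg residual_mass_nonneg[of excess_P P S]
      residual_mass_nonneg[of excess_Q Q T]
    by (simp add: ennreal_mult[symmetric] sum_nonneg)
  finally show ?thesis .
qed

lemma distr_coupling_fst: "distr coupling borel fst = P"
proof (rule measure_eqI)
  fix S assume "S \<in> sets (distr coupling borel fst)"
  then have S [measurable]: "S \<in> sets borel" by simp
  have r: "residual_mass P excess_P S * deficit / deficit = residual_mass P excess_P S"
    using residual_mass_le_UNIV[OF finite_measure_P sets_P, of excess_P S]
      residual_mass_nonneg[of excess_P P S] coefficients_nonneg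
    by (cases "deficit = 0") (auto simp: residual_mass_UNIV)
  have "emeasure (distr coupling borel fst) S = emeasure coupling (S \<times> UNIV)"
    by (subst emeasure_distr) (auto simp: vimage_fst)
  also have "\<dots> = ennreal ((\<Sum>i\<in>I. weight i * measure P (A i \<inter> S) * mass_Q i)
      + residual_mass P excess_P S * deficit / deficit)"
    using emeasure_coupling_Times[OF S sets.top[of borel, unfolded space_borel]]
    by (simp only: residual_mass_UNIV Int_UNIV_right mass_Q_def)
  also have "\<dots> = ennreal ((\<Sum>i\<in>I. (weight i * mass_Q i) * measure P (A i \<inter> S))
      + residual_mass P excess_P S)"
    unfolding r by (simp add: ac_simps)
  also have "\<dots> = emeasure P S"
    using weight_complements_excess(1) coefficients_nonneg
    by (subst measure_eq_weighted_cells_plus_residual_mass[OF finite_measure_P sets_P])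
       (auto simp: mass_P_def finite_measure.emeasure_eq_measure[OF finite_measure_P] sets_P)
  finally show "emeasure (distr coupling borel fst) S = emeasure P S" .
qed (simp add: sets_P)

lemma distr_coupling_snd: "distr coupling borel snd = Q"
proof (rule measure_eqI)
  fix S assume "S \<in> sets (distr coupling borel snd)"
  then have S [measurable]: "S \<in> sets borel" by simp
  have r: "deficit * residual_mass Q excess_Q S / deficit = residual_mass Q excess_Q S"
    using residual_mass_le_UNIV[OF finite_measure_Q sets_Q, of excess_Q S]
      residual_mass_nonneg[of excess_Q Q S] coefficients_nonneg
    by (cases "deficit = 0") (auto simp: residual_mass_UNIV)
  have "emeasure (distr coupling borel snd) S = emeasure coupling (UNIV \<times> S)"
    by (subst emeasure_distr) (auto simp: vimage_snd)
  also have "\<dots> = ennreal ((\<Sum>i\<in>I. weight i * mass_P i * measure Q (A i \<inter> S))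
      + deficit * residual_mass Q excess_Q S / deficit)"
    using emeasure_coupling_Times[OF sets.top[of borel, unfolded space_borel] S]
    by (simp only: residual_mass_UNIV Int_UNIV_right mass_P_def)
  also have "\<dots> = ennreal ((\<Sum>i\<in>I. (weight i * mass_P i) * measure Q (A i \<inter> S))
      + residual_mass Q excess_Q S)"
    unfolding r by (simp add: ac_simps)
  also have "\<dots> = emeasure Q S"
    using weight_complements_excess(2) coefficients_nonneg
    by (subst measure_eq_weighted_cells_plus_residual_mass[OF finite_measure_Q sets_Q])
       (auto simp: mass_Q_def finite_measure.emeasure_eq_measure[OF finite_measure_Q] sets_Q)
  finally show "emeasure (distr coupling borel snd) S = emeasure Q S" .
qed (simp add: sets_Q)

lemma coupling_in_couplings: "coupling \<in> couplings P Q"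
proof -
  have "emeasure coupling (space coupling) = emeasure (distr coupling borel fst) UNIV"
    by (subst emeasure_distr) auto
  also have "\<dots> = 1"
    using prob_space.emeasure_space_1[OF prob_P] sets_eq_imp_space_eq[OF sets_P]
    by (simp add: distr_coupling_fst)
  finally have "prob_space coupling" by (rule prob_spaceI)
  then show ?thesis
    unfolding couplings_def using distr_coupling_fst distr_coupling_snd sets_coupling by auto
qed

lemma kernel_cost_le:
  assumes "p \<ge> 1" and diam: "\<And>i x y. i \<in> I \<Longrightarrow> x \<in> A i \<Longrightarrow> y \<in> A i \<Longrightarrow> norm (x - y) \<le> \<eta>"
  shows "kernel x y * norm (x - y) powr p
    \<le> (\<Sum>i\<in>I. weight i * \<eta> powr p * (indicator (A i) x * indicator (A i) y))
      + 2 powr (p - 1) / deficit * (residual excess_P x * norm x powr p * residual excess_Q y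
        + residual excess_P x * (residual excess_Q y * norm y powr p))"
proof -
  have "norm (x - y) powr p \<le> (norm x + norm y) powr p"
    using assms(1) by (intro powr_mono2) (auto simp: norm_triangle_ineq4)
  also have "\<dots> \<le> 2 powr (p - 1) * (norm x powr p + norm y powr p)"
    using assms(1) by (intro powr_add_le_two_powr) auto
  finally have far: "residual excess_P x * residual excess_Q y / deficit * norm (x - y) powr p
      \<le> residual excess_P x * residual excess_Q y / deficit
        * (2 powr (p - 1) * (norm x powr p + norm y powr p))"
    using coefficients_nonneg deficit_nonneg
    by (intro mult_left_mono) (auto simp: residual_nonneg)
  have near: "weight i * (indicator (A i) x * indicator (A i) y) * norm (x - y) powr p
      \<le> weight i * \<eta> powr p * (indicator (A i) x * indicator (A i) y)" if "i \<in> I" for i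
  proof (cases "x \<in> A i \<and> y \<in> A i")
    case True
    then have "norm (x - y) powr p \<le> \<eta> powr p"
      using diam[OF that] assms(1) by (intro powr_mono2) auto
    then show ?thesis using True coefficients_nonneg[of i] by (simp add: mult_left_mono)
  qed (auto simp: indicator_def)
  have "kernel x y * norm (x - y) powr p
      = (\<Sum>i\<in>I. weight i * (indicator (A i) x * indicator (A i) y) * norm (x - y) powr p)
        + residual excess_P x * residual excess_Q y / deficit * norm (x - y) powr p"
    by (simp add: kernel_def sum_distrib_left sum_distrib_right algebra_simps)
  also have "\<dots> \<le> (\<Sum>i\<in>I. weight i * \<eta> powr p * (indicator (A i) x * indicator (A i) y))
      + residual excess_P x * residual excess_Q y / deficit
        * (2 powr (p - 1) * (norm x powr p + norm y powr p))"
    using near far by (intro add_mono sum_mono) auto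
  finally show ?thesis by (simp add: algebra_simps)
qed

lemma ennreal_kernel_cost_le:
  assumes "p \<ge> 1" and "\<And>i x y. i \<in> I \<Longrightarrow> x \<in> A i \<Longrightarrow> y \<in> A i \<Longrightarrow> norm (x - y) \<le> \<eta>"
  shows "ennreal (kernel x y) * ennreal (norm (x - y) powr p)
    \<le> (\<Sum>i\<in>I. ennreal (weight i * \<eta> powr p * indicator (A i) x) * ennreal (indicator (A i) y))
      + ennreal (2 powr (p - 1) / deficit)
        * (ennreal (residual excess_P x * norm x powr p) * ennreal (residual excess_Q y)
          + ennreal (residual excess_P x) * ennreal (residual excess_Q y * norm y powr p))"
proof -
  let ?rP = "residual excess_P" and ?rQ = "residual excess_Q" and ?c = "2 powr (p - 1) / deficit"
  have "ennreal (kernel x y) * ennreal (norm (x - y) powr p)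
      \<le> ennreal ((\<Sum>i\<in>I. weight i * \<eta> powr p * (indicator (A i) x * indicator (A i) y))
        + ?c * (?rP x * norm x powr p * ?rQ y + ?rP x * (?rQ y * norm y powr p)))"
    using kernel_cost_le[OF assms] kernel_nonneg
    by (simp add: ennreal_mult[symmetric] ennreal_leI del: ennreal_plus)
  also have "\<dots> = (\<Sum>i\<in>I. ennreal (weight i * \<eta> powr p * indicator (A i) x)
        * ennreal (indicator (A i) y))
      + ennreal ?c * (ennreal (?rP x * norm x powr p) * ennreal (?rQ y)
        + ennreal (?rP x) * ennreal (?rQ y * norm y powr p))"
    using coefficients_nonneg deficit_nonneg residual_nonneg[of excess_P x]
      residual_nonneg[of excess_Q y]
    by (simp add: ennreal_mult'[symmetric] ennreal_plus[symmetric] sum_nonneg mult.assoc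
        del: ennreal_plus)
  finally show ?thesis .
qed

lemma nn_integral_coupling_cost_le:
  assumes "p \<ge> 1" and diam: "\<And>i x y. i \<in> I \<Longrightarrow> x \<in> A i \<Longrightarrow> y \<in> A i \<Longrightarrow> norm (x - y) \<le> \<eta>"
  shows "(\<integral>\<^sup>+ z. ennreal (norm (fst z - snd z) powr p) \<partial>coupling)
    \<le> ennreal (\<eta> powr p) + ennreal (2 powr (p - 1))
      * ((\<integral>\<^sup>+ x. ennreal (residual excess_P x * norm x powr p) \<partial>P)
        + (\<integral>\<^sup>+ y. ennreal (residual excess_Q y * norm y powr p) \<partial>Q))"
proof -
  let ?rP = "residual excess_P" and ?rQ = "residual excess_Q"
  define JP where "JP = (\<integral>\<^sup>+ x. ennreal (?rP x * norm x powr p) \<partial>P)"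
  define JQ where "JQ = (\<integral>\<^sup>+ y. ennreal (?rQ y * norm y powr p) \<partial>Q)"
  define c where "c = 2 powr (p - 1) / deficit"
  have c: "c \<ge> 0" using deficit_nonneg by (simp add: c_def)
  note pointwise = ennreal_kernel_cost_le[OF assms, folded c_def]
  have cell_term: "(\<integral>\<^sup>+ z. ennreal (weight i * \<eta> powr p * indicator (A i) (fst z))
      * ennreal (indicator (A i) (snd z)) \<partial>(P \<Otimes>\<^sub>M Q))
      = ennreal (\<eta> powr p * (weight i * mass_P i * mass_Q i))" for i
    using nn_integral_cell_product[of "weight i * \<eta> powr p" UNIV UNIV i] coefficients_nonneg[of i]
    by (simp add: mass_P_def mass_Q_def ac_simps)
  have pair_P: "(\<integral>\<^sup>+ z. ennreal (?rP (fst z) * norm (fst z) powr p) * ennreal (?rQ (snd z))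
      \<partial>(P \<Otimes>\<^sub>M Q)) = JP * ennreal deficit"
    by (subst nn_integral_pair_measure_mult[OF sigma_finite_Q])
       (simp_all add: JP_def nn_integral_residual_excess)
  have pair_Q: "(\<integral>\<^sup>+ z. ennreal (?rP (fst z)) * ennreal (?rQ (snd z) * norm (snd z) powr p)
      \<partial>(P \<Otimes>\<^sub>M Q)) = ennreal deficit * JQ"
    by (subst nn_integral_pair_measure_mult[OF sigma_finite_Q])
       (simp_all add: JQ_def nn_integral_residual_excess)
  have shared_sum: "(\<Sum>i\<in>I. \<eta> powr p * (weight i * mass_P i * mass_Q i)) \<le> \<eta> powr p"
    using sum_weight_mass_le_1 coefficients_nonneg
    by (simp add: sum_distrib_left[symmetric] mult_left_le sum_nonneg)
  have "(\<integral>\<^sup>+ z. ennreal (norm (fst z - snd z) powr p) \<partial>coupling)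
      = (\<integral>\<^sup>+ z. ennreal (kernel (fst z) (snd z)) * ennreal (norm (fst z - snd z) powr p)
          \<partial>(P \<Otimes>\<^sub>M Q))"
    unfolding coupling_def by (rule nn_integral_density) auto
  also have "\<dots> \<le> (\<integral>\<^sup>+ z. (\<Sum>i\<in>I. ennreal (weight i * \<eta> powr p * indicator (A i) (fst z))
        * ennreal (indicator (A i) (snd z)))
      + ennreal c * (ennreal (?rP (fst z) * norm (fst z) powr p) * ennreal (?rQ (snd z))
        + ennreal (?rP (fst z)) * ennreal (?rQ (snd z) * norm (snd z) powr p)) \<partial>(P \<Otimes>\<^sub>M Q))"
    by (intro nn_integral_mono pointwise)
  also have "\<dots> = (\<Sum>i\<in>I. ennreal (\<eta> powr p * (weight i * mass_P i * mass_Q i)))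
      + ennreal c * (JP * ennreal deficit + ennreal deficit * JQ)"
    by (subst nn_integral_add, simp, simp, subst nn_integral_sum, simp, subst nn_integral_cmult,
        simp, subst nn_integral_add)
       (simp_all add: cell_term pair_P pair_Q)
  also have "\<dots> \<le> ennreal (\<eta> powr p) + ennreal (2 powr (p - 1)) * (JP + JQ)"
  proof (rule add_mono)
    show "(\<Sum>i\<in>I. ennreal (\<eta> powr p * (weight i * mass_P i * mass_Q i))) \<le> ennreal (\<eta> powr p)"
      using shared_sum coefficients_nonneg by (simp add: ennreal_leI)
    have "ennreal c * (JP * ennreal deficit + ennreal deficit * JQ) = ennreal (c * deficit) * (JP + JQ)"
      using c deficit_nonneg by (simp add: ennreal_mult algebra_simps)
    also have "\<dots> \<le> ennreal (2 powr (p - 1)) * (JP + JQ)"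
      using deficit_nonneg by (intro mult_right_mono ennreal_leI) (auto simp: c_def)
    finally show "ennreal c * (JP * ennreal deficit + ennreal deficit * JQ)
        \<le> ennreal (2 powr (p - 1)) * (JP + JQ)" .
  qed
  finally show ?thesis unfolding JP_def JQ_def .
qed

lemma wasserstein_pow_le_cells:
  assumes "p \<ge> 1"
    and diam: "\<And>i x y. i \<in> I \<Longrightarrow> x \<in> A i \<Longrightarrow> y \<in> A i \<Longrightarrow> norm (x - y) \<le> \<eta>"
    and "\<rho> \<ge> 0" and bounded: "\<And>i x. i \<in> I \<Longrightarrow> x \<in> A i \<Longrightarrow> norm x \<le> \<rho>"
  shows "wasserstein_pow p P Q
    \<le> ennreal (\<eta> powr p + 2 powr (p - 1) * \<rho> powr p * (\<Sum>i\<in>I. \<bar>mass_P i - mass_Q i\<bar>))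
      + ennreal (2 powr (p - 1))
        * ((\<integral>\<^sup>+ x. ennreal (indicator outside x * norm x powr p) \<partial>P)
          + (\<integral>\<^sup>+ x. ennreal (indicator outside x * norm x powr p) \<partial>Q))"
proof -
  define TP where "TP = (\<integral>\<^sup>+ x. ennreal (indicator outside x * norm x powr p) \<partial>P)"
  define TQ where "TQ = (\<integral>\<^sup>+ x. ennreal (indicator outside x * norm x powr p) \<partial>Q)"
  define gapP where "gapP = (\<Sum>i\<in>I. mass_P i - shared i)"
  define gapQ where "gapQ = (\<Sum>i\<in>I. mass_Q i - shared i)"
  have gaps: "gapP \<ge> 0" "gapQ \<ge> 0" "gapP + gapQ = (\<Sum>i\<in>I. \<bar>mass_P i - mass_Q i\<bar>)"
    unfolding gapP_def gapQ_def using shared_le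
    by (auto intro!: sum_nonneg sum.cong simp: sum.distrib[symmetric] shared_def)
  have "wasserstein_pow p P Q \<le> (\<integral>\<^sup>+ z. ennreal (norm (fst z - snd z) powr p) \<partial>coupling)"
    unfolding wasserstein_pow_def by (rule INF_lower[OF coupling_in_couplings])
  also have "\<dots> \<le> ennreal (\<eta> powr p) + ennreal (2 powr (p - 1))
      * ((ennreal (\<rho> powr p * gapP) + TP) + (ennreal (\<rho> powr p * gapQ) + TQ))"
    using nn_integral_residual_norm_powr_le[OF finite_measure_P sets_P, of excess_P p \<rho>]
      nn_integral_residual_norm_powr_le[OF finite_measure_Q sets_Q, of excess_Q p \<rho>]
      coefficients_nonneg assms(1,3) bounded
    by (intro order_trans[OF nn_integral_coupling_cost_le[OF assms(1) diam]] add_mono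
        mult_left_mono order_refl)
       (auto simp: TP_def TQ_def gapP_def gapQ_def mass_P_def[symmetric] mass_Q_def[symmetric]
         excess_P_mult excess_Q_mult)
  also have "\<dots> = ennreal (\<eta> powr p) + ennreal (2 powr (p - 1))
      * (ennreal (\<rho> powr p * gapP) + ennreal (\<rho> powr p * gapQ))
      + ennreal (2 powr (p - 1)) * (TP + TQ)"
    by (simp only: distrib_left add_ac)
  also have "\<dots> = ennreal (\<eta> powr p + 2 powr (p - 1) * \<rho> powr p * (gapP + gapQ))
      + ennreal (2 powr (p - 1)) * (TP + TQ)"
    using gaps(1,2) by (simp add: ennreal_mult[symmetric] ennreal_plus[symmetric] distrib_left
        mult.assoc del: ennreal_plus)
  finally show ?thesis unfolding TP_def TQ_def gaps(3) .
qed

end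

section \<open>Deviation of empirical frequencies\<close>

lemma (in prob_space) integral_sum_square_le_card:
  fixes Y :: "nat \<Rightarrow> 'a \<Rightarrow> real"
  assumes [measurable]: "\<And>k. Y k \<in> borel_measurable M"
    and indep: "indep_vars (\<lambda>_. borel) Y UNIV"
    and bounded: "\<And>k \<omega>. \<bar>Y k \<omega>\<bar> \<le> 1" and centered: "\<And>k. expectation (Y k) = 0"
    and "finite K"
  shows "(\<integral>\<omega>. (\<Sum>k\<in>K. Y k \<omega>)\<^sup>2 \<partial>M) \<le> card K"
proof -
  have integrable: "integrable M (Y k)" for k
    by (rule integrable_const_bound[where B=1]) (use bounded in auto)
  have integrable_prod: "integrable M (\<lambda>\<omega>. Y k \<omega> * Y l \<omega>)" for k l
    by (rule integrable_const_bound[where B=1])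
       (use bounded[of k] bounded[of l] in \<open>auto simp: abs_mult intro!: mult_le_one\<close>)
  have uncorrelated: "(\<integral>\<omega>. Y k \<omega> * Y l \<omega> \<partial>M) = 0" if "k \<noteq> l" for k l
  proof -
    have "indep_vars (\<lambda>_. borel) Y {k, l}" by (rule indep_vars_subset[OF indep]) auto
    then have "(\<integral>\<omega>. (\<Prod>i\<in>{k, l}. Y i \<omega>) \<partial>M) = (\<Prod>i\<in>{k, l}. expectation (Y i))"
      by (intro indep_vars_lebesgue_integral) (auto simp: integrable)
    then show ?thesis using that by (simp add: centered)
  qed
  have second_moment: "(\<integral>\<omega>. Y k \<omega> * Y k \<omega> \<partial>M) \<le> 1" for k
  proof -
    have "(\<integral>\<omega>. Y k \<omega> * Y k \<omega> \<partial>M) \<le> (\<integral>\<omega>. 1 \<partial>M)"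
    proof (intro integral_mono integrable_prod)
      fix \<omega>
      have "\<bar>Y k \<omega>\<bar> * \<bar>Y k \<omega>\<bar> \<le> 1" by (rule mult_le_one) (auto simp: bounded)
      then show "Y k \<omega> * Y k \<omega> \<le> 1" by (simp add: abs_mult_self_eq)
    qed simp
    then show ?thesis by (simp add: prob_space)
  qed
  have "(\<integral>\<omega>. (\<Sum>k\<in>K. Y k \<omega>)\<^sup>2 \<partial>M) = (\<integral>\<omega>. (\<Sum>k\<in>K. \<Sum>l\<in>K. Y k \<omega> * Y l \<omega>) \<partial>M)"
    by (simp add: power2_eq_square sum_product)
  also have "\<dots> = (\<Sum>k\<in>K. \<Sum>l\<in>K. \<integral>\<omega>. Y k \<omega> * Y l \<omega> \<partial>M)"
    by (simp add: integrable_prod)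
  also have "\<dots> = (\<Sum>k\<in>K. \<integral>\<omega>. Y k \<omega> * Y k \<omega> \<partial>M)"
  proof (intro sum.cong refl)
    fix k assume "k \<in> K"
    have "(\<Sum>l\<in>K. \<integral>\<omega>. Y k \<omega> * Y l \<omega> \<partial>M)
        = (\<Sum>l\<in>K. if l = k then \<integral>\<omega>. Y k \<omega> * Y k \<omega> \<partial>M else 0)"
      by (intro sum.cong refl) (auto simp: uncorrelated)
    then show "(\<Sum>l\<in>K. \<integral>\<omega>. Y k \<omega> * Y l \<omega> \<partial>M) = (\<integral>\<omega>. Y k \<omega> * Y k \<omega> \<partial>M)"
      using \<open>k \<in> K\<close> \<open>finite K\<close> by simp
  qed
  also have "\<dots> \<le> (\<Sum>k\<in>K. 1)" by (intro sum_mono second_moment)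
  finally show ?thesis by simp
qed

lemma (in prob_space) nn_integral_abs_le_sqrt:
  fixes Z :: "'a \<Rightarrow> real"
  assumes [measurable]: "Z \<in> borel_measurable M" and "integrable M (\<lambda>\<omega>. (Z \<omega>)\<^sup>2)"
    and "(\<integral>\<omega>. (Z \<omega>)\<^sup>2 \<partial>M) \<le> v" and "v > 0"
  shows "(\<integral>\<^sup>+ \<omega>. ennreal \<bar>Z \<omega>\<bar> \<partial>M) \<le> ennreal (sqrt v)"
proof -
  define s where "s = sqrt v"
  have s: "s > 0" "s * s = v" using assms(4) by (auto simp: s_def)
  \<comment> \<open>AM-GM: \<open>2 s \<bar>z\<bar> \<le> z\<^sup>2 + s\<^sup>2\<close>, which avoids Jensen's inequality\<close>
  have am_gm: "\<bar>Z \<omega>\<bar> \<le> ((Z \<omega>)\<^sup>2 / s + s) / 2" for \<omega>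
  proof -
    have "0 \<le> (\<bar>Z \<omega>\<bar> - s)\<^sup>2" by simp
    then have "2 * s * \<bar>Z \<omega>\<bar> \<le> (Z \<omega>)\<^sup>2 + s * s" by (simp add: power2_eq_square algebra_simps)
    then show ?thesis using s by (simp add: field_simps power2_eq_square)
  qed
  have "(\<integral>\<^sup>+ \<omega>. ennreal \<bar>Z \<omega>\<bar> \<partial>M) \<le> (\<integral>\<^sup>+ \<omega>. ennreal (((Z \<omega>)\<^sup>2 / s + s) / 2) \<partial>M)"
    by (intro nn_integral_mono ennreal_leI am_gm)
  also have "\<dots> = ennreal (\<integral>\<omega>. ((Z \<omega>)\<^sup>2 / s + s) / 2 \<partial>M)"
    using assms(2) s by (intro nn_integral_eq_integral) auto
  also have "\<dots> = ennreal (((\<integral>\<omega>. (Z \<omega>)\<^sup>2 \<partial>M) / s + s) / 2)"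
    using assms(2) by (simp add: prob_space)
  also have "\<dots> \<le> ennreal s"
    using assms(3) s by (intro ennreal_leI) (simp add: field_simps)
  finally show ?thesis by (simp add: s_def)
qed

lemma (in prob_space) nn_integral_abs_sum_le_sqrt_card:
  fixes Y :: "nat \<Rightarrow> 'a \<Rightarrow> real"
  assumes [measurable]: "\<And>k. Y k \<in> borel_measurable M"
    and "indep_vars (\<lambda>_. borel) Y UNIV"
    and bounded: "\<And>k \<omega>. \<bar>Y k \<omega>\<bar> \<le> 1" and "\<And>k. expectation (Y k) = 0"
    and "finite K" and "K \<noteq> {}"
  shows "(\<integral>\<^sup>+ \<omega>. ennreal \<bar>\<Sum>k\<in>K. Y k \<omega>\<bar> \<partial>M) \<le> ennreal (sqrt (card K))"
proof (rule nn_integral_abs_le_sqrt)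
  have "integrable M (\<lambda>\<omega>. Y k \<omega> * Y l \<omega>)" for k l
    by (rule integrable_const_bound[where B=1])
       (use bounded[of k] bounded[of l] in \<open>auto simp: abs_mult intro!: mult_le_one\<close>)
  then show "integrable M (\<lambda>\<omega>. (\<Sum>k\<in>K. Y k \<omega>)\<^sup>2)"
    by (simp add: power2_eq_square sum_product)
  show "(\<integral>\<omega>. (\<Sum>k\<in>K. Y k \<omega>)\<^sup>2 \<partial>M) \<le> card K"
    by (rule integral_sum_square_le_card) (use assms in auto)
  show "real (card K) > 0" using assms(5,6) by (simp add: card_gt_0_iff)
qed measurable

lemma (in prob_space) expected_empirical_frequency_deviation:
  fixes X :: "nat \<Rightarrow> 'a \<Rightarrow> 'c::euclidean_space"
  assumes [measurable]: "\<And>k. X k \<in> borel_measurable M" and indep: "indep_vars (\<lambda>_. borel) X UNIV"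
    and distr: "\<And>k. distr M borel (X k) = \<mu>" and [measurable]: "S \<in> sets borel" and N: "N \<ge> 1"
  shows "(\<integral>\<^sup>+ \<omega>. ennreal \<bar>(\<Sum>k\<in>{1..N}. indicator S (X k \<omega>)) / real N - measure \<mu> S\<bar> \<partial>M)
    \<le> ennreal (1 / sqrt N)"
proof -
  interpret \<mu>: prob_space \<mu> using prob_space_distr[of "X 0" borel] distr[of 0] by simp
  define q where "q = measure \<mu> S"
  define Y where "Y k \<omega> = indicator S (X k \<omega>) - q" for k \<omega>
  have [measurable]: "Y k \<in> borel_measurable M" for k unfolding Y_def by measurable
  have bounded: "\<bar>Y k \<omega>\<bar> \<le> 1" for k \<omega>
    using \<mu>.prob_le_1[of S] by (auto simp: Y_def q_def indicator_def)
  have centered: "expectation (Y k) = 0" for k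
  proof -
    have "expectation (\<lambda>\<omega>. indicator S (X k \<omega>) :: real) = (\<integral>x. indicator S x \<partial>distr M borel (X k))"
      by (rule integral_distr[symmetric]) auto
    also have "\<dots> = q"
      using distr[of k] space_distr[of M borel "X k"] by (simp add: q_def)
    moreover have "integrable M (\<lambda>\<omega>. indicator S (X k \<omega>) :: real)"
      by (rule integrable_const_bound[where B=1]) auto
    ultimately show ?thesis
      unfolding Y_def by (subst Bochner_Integration.integral_diff) (auto simp: prob_space)
  qed
  have indep_Y: "indep_vars (\<lambda>_. borel) Y UNIV"
  proof -
    have "Y = (\<lambda>i \<omega>. indicator S (X i \<omega>) - q)" by (simp add: Y_def fun_eq_iff)
    then show ?thesis
      using indep_vars_compose2[OF indep, of "\<lambda>i x. indicator S x - q" "\<lambda>_. borel"] by simp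
  qed
  have second_moment: "(\<integral>\<^sup>+ \<omega>. ennreal \<bar>\<Sum>k\<in>{1..N}. Y k \<omega>\<bar> \<partial>M) \<le> ennreal (sqrt N)"
    using nn_integral_abs_sum_le_sqrt_card[OF _ indep_Y bounded centered, of "{1..N}"] N by simp
  have "(\<integral>\<^sup>+ \<omega>. ennreal \<bar>(\<Sum>k\<in>{1..N}. indicator S (X k \<omega>)) / real N - q\<bar> \<partial>M)
      = (\<integral>\<^sup>+ \<omega>. ennreal \<bar>\<Sum>k\<in>{1..N}. Y k \<omega>\<bar> * ennreal (1 / N) \<partial>M)"
  proof (intro nn_integral_cong)
    fix \<omega>
    have "(\<Sum>k\<in>{1..N}. indicator S (X k \<omega>)) / real N - q = (\<Sum>k\<in>{1..N}. Y k \<omega>) * (1 / N)"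
      using N by (simp add: Y_def sum_subtractf field_simps)
    then show "ennreal \<bar>(\<Sum>k\<in>{1..N}. indicator S (X k \<omega>)) / real N - q\<bar>
        = ennreal \<bar>\<Sum>k\<in>{1..N}. Y k \<omega>\<bar> * ennreal (1 / N)"
      by (simp add: abs_mult ennreal_mult''[symmetric])
  qed
  also have "\<dots> = (\<integral>\<^sup>+ \<omega>. ennreal \<bar>\<Sum>k\<in>{1..N}. Y k \<omega>\<bar> \<partial>M) * ennreal (1 / N)"
    by (rule nn_integral_multc) measurable
  also have "\<dots> \<le> ennreal (sqrt N) * ennreal (1 / N)"
    by (intro mult_right_mono second_moment) simp
  also have "\<dots> = ennreal (1 / sqrt N)"
  proof -
    have "sqrt (real N) * sqrt (real N) = real N" by simp
    then have "sqrt (real N) * (1 / real N) = 1 / sqrt N" using N by (simp add: field_simps)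
    then show ?thesis by (simp add: ennreal_mult[symmetric])
  qed
  finally show ?thesis by (simp add: q_def)
qed

section \<open>A grid of cubes\<close>

text \<open>The cube \<open>[-K/n, K/n)\<^sup>d\<close> cut into \<open>(2K)\<^sup>d\<close> cubes of side \<open>1/n\<close>; a cube is indexed by
  the integer parts of the coordinates of its points scaled by \<open>n\<close>.\<close>

definition grid_index :: "nat \<Rightarrow> ('a::euclidean_space \<Rightarrow> int) set" where
  "grid_index K = PiE Basis (\<lambda>_. {- int K..<int K})"

definition grid_cell :: "nat \<Rightarrow> ('a::euclidean_space \<Rightarrow> int) \<Rightarrow> 'a set" where
  "grid_cell n k = {x. \<forall>b\<in>Basis. \<lfloor>real n * (x \<bullet> b)\<rfloor> = k b}"

lemma grid_cell_borel [measurable]: "grid_cell n k \<in> sets borel"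
proof -
  have "grid_cell n k = (\<Inter>b\<in>Basis. (\<lambda>x. \<lfloor>real n * (x \<bullet> b)\<rfloor>) -` {k b})"
    by (auto simp: grid_cell_def)
  also have "\<dots> \<in> sets borel"
  proof (intro sets.finite_INT)
    fix b :: 'a
    have "(\<lambda>x::'a. \<lfloor>real n * (x \<bullet> b)\<rfloor>) \<in> measurable borel (count_space UNIV)" by measurable
    from measurable_sets[OF this, of "{k b}"]
    show "(\<lambda>x::'a. \<lfloor>real n * (x \<bullet> b)\<rfloor>) -` {k b} \<in> sets borel" by simp
  qed auto
  finally show ?thesis .
qed

lemma disjoint_family_grid_cell: "disjoint_family_on (grid_cell n) (grid_index K)"
  unfolding disjoint_family_on_def
proof (intro ballI impI)
  fix k l :: "'a \<Rightarrow> int" assume "k \<in> grid_index K" "l \<in> grid_index K" "k \<noteq> l"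
  then obtain b where "b \<in> Basis" "k b \<noteq> l b"
    unfolding grid_index_def by (metis PiE_ext)
  then show "grid_cell n k \<inter> grid_cell n l = {}" by (auto simp: grid_cell_def)
qed

lemma finite_grid_index: "finite (grid_index K :: ('a::euclidean_space \<Rightarrow> int) set)"
  by (simp add: grid_index_def finite_PiE)

lemma card_grid_index: "card (grid_index K :: ('a::euclidean_space \<Rightarrow> int) set) = (2 * K) ^ DIM('a)"
proof -
  have "card {- int K..<int K} = 2 * K" by simp
  then show ?thesis by (simp only: grid_index_def card_PiE finite_Basis prod_constant)
qed

lemma norm_diff_le_grid_cell:
  fixes x y :: "'a::euclidean_space"
  assumes "n \<ge> 1" and "x \<in> grid_cell n k" and "y \<in> grid_cell n k"
  shows "norm (x - y) \<le> DIM('a) / n"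
proof -
  have "\<bar>(x - y) \<bullet> b\<bar> \<le> 1 / n" if b: "b \<in> Basis" for b
  proof -
    have "\<lfloor>real n * (x \<bullet> b)\<rfloor> = \<lfloor>real n * (y \<bullet> b)\<rfloor>" using assms(2,3) b by (auto simp: grid_cell_def)
    then have "\<bar>real n * (x \<bullet> b) - real n * (y \<bullet> b)\<bar> < 1" by linarith
    then have "real n * \<bar>(x - y) \<bullet> b\<bar> < 1"
      by (simp add: inner_diff_left right_diff_distrib[symmetric] abs_mult)
    then show ?thesis using assms(1) by (simp add: field_simps)
  qed
  then have "(\<Sum>b\<in>Basis. \<bar>(x - y) \<bullet> b\<bar>) \<le> (\<Sum>b\<in>(Basis::'a set). 1 / n)" by (intro sum_mono)
  with norm_le_l1[of "x - y"] show ?thesis by simp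
qed

lemma norm_le_grid_cell:
  fixes x :: "'a::euclidean_space"
  assumes "n \<ge> 1" and "k \<in> grid_index K" and "x \<in> grid_cell n k"
  shows "norm x \<le> DIM('a) * real K / n"
proof -
  have "\<bar>x \<bullet> b\<bar> \<le> K / n" if b: "b \<in> Basis" for b
  proof -
    have "\<lfloor>real n * (x \<bullet> b)\<rfloor> \<in> {- int K..<int K}"
      using assms(2,3) b by (auto simp: grid_cell_def grid_index_def PiE_def)
    then have "\<bar>real n * (x \<bullet> b)\<bar> \<le> real K" by auto linarith+
    then show ?thesis using assms(1) by (simp add: field_simps abs_mult)
  qed
  then have "(\<Sum>b\<in>Basis. \<bar>x \<bullet> b\<bar>) \<le> (\<Sum>b\<in>(Basis::'a set). K / n)" by (intro sum_mono)
  with norm_le_l1[of x] show ?thesis by simp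
qed

lemma norm_ge_outside_grid:
  fixes x :: "'a::euclidean_space"
  assumes "n \<ge> 1" and "x \<notin> (\<Union>k\<in>grid_index K. grid_cell n k)"
  shows "norm x \<ge> K / n"
proof (rule ccontr)
  assume "\<not> norm x \<ge> K / n"
  define k where "k = (\<lambda>b\<in>(Basis::'a set). \<lfloor>real n * (x \<bullet> b)\<rfloor>)"
  have "k \<in> grid_index K" unfolding grid_index_def k_def
  proof (rule restrict_PiE_iff[THEN iffD2], intro ballI)
    fix b :: 'a assume "b \<in> Basis"
    then have "\<bar>x \<bullet> b\<bar> < K / n" using Basis_le_norm[of b x] \<open>\<not> norm x \<ge> K / n\<close> by linarith
    then have "\<bar>real n * (x \<bullet> b)\<bar> < K" using assms(1) by (simp add: field_simps abs_mult)
    then show "\<lfloor>real n * (x \<bullet> b)\<rfloor> \<in> {- int K..<int K}" by auto linarith+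
  qed
  moreover have "x \<in> grid_cell n k" by (auto simp: grid_cell_def k_def)
  ultimately show False using assms(2) by auto
qed

section \<open>The estimate for a fixed grid\<close>

definition tail_norm_powr :: "real \<Rightarrow> real \<Rightarrow> 'a::euclidean_space \<Rightarrow> ennreal" where
  "tail_norm_powr p r x = ennreal (indicator {x. r \<le> norm x} x * norm x powr p)"

lemma borel_measurable_tail_norm_powr [measurable]: "tail_norm_powr p r \<in> borel_measurable borel"
  unfolding tail_norm_powr_def by measurable

lemma wasserstein_pow_empirical_measure_le_grid:
  fixes x :: "nat \<Rightarrow> 'a::euclidean_space" and \<mu> :: "'a measure" and N n K :: nat
  assumes "prob_space \<mu>" and "sets \<mu> = sets borel" and "p \<ge> 1" and "N \<ge> 1" and "n \<ge> 1"
  shows "wasserstein_pow p (empirical_measure x N) \<mu>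
    \<le> ennreal ((DIM('a) / n) powr p)
      + (\<Sum>k\<in>grid_index K. ennreal (2 powr (p - 1) * (DIM('a) * real K / n) powr p
          * \<bar>(\<Sum>j\<in>{1..N}. indicator (grid_cell n k) (x j)) / real N - measure \<mu> (grid_cell n k)\<bar>))
      + ennreal (2 powr (p - 1)) * ((\<Sum>j\<in>{1..N}. tail_norm_powr p (K / n) (x j)) / of_nat N)
      + ennreal (2 powr (p - 1)) * (\<integral>\<^sup>+ y. tail_norm_powr p (K / n) y \<partial>\<mu>)"
proof -
  let ?P = "empirical_measure x N" and ?I = "grid_index K :: ('a \<Rightarrow> int) set"
  let ?B = "2 powr (p - 1) * (DIM('a) * real K / n) powr p"
  interpret cell_coupling ?P \<mu> ?I "grid_cell n"
    by (rule cell_coupling.intro)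
       (simp_all add: assms(1,2) prob_space_empirical_measure[OF assms(4)] finite_grid_index
         disjoint_family_grid_cell)
  have outside_tail: "ennreal (indicator outside y * norm y powr p) \<le> tail_norm_powr p (K / n) y" for y
    using norm_ge_outside_grid[OF assms(5), of y K]
    by (auto simp: outside_def tail_norm_powr_def indicator_def intro: ennreal_leI)
  have "wasserstein_pow p ?P \<mu>
      \<le> ennreal ((DIM('a) / n) powr p + ?B * (\<Sum>k\<in>?I. \<bar>mass_P k - mass_Q k\<bar>))
        + ennreal (2 powr (p - 1)) * ((\<integral>\<^sup>+ y. ennreal (indicator outside y * norm y powr p) \<partial>?P)
          + (\<integral>\<^sup>+ y. ennreal (indicator outside y * norm y powr p) \<partial>\<mu>))"
  proof (rule wasserstein_pow_le_cells[OF assms(3)])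
    show "norm (y - z) \<le> DIM('a) / n" if "k \<in> ?I" "y \<in> grid_cell n k" "z \<in> grid_cell n k"
      for k y z
      using norm_diff_le_grid_cell[OF assms(5) that(2,3)] .
    show "norm y \<le> DIM('a) * real K / n" if "k \<in> ?I" "y \<in> grid_cell n k" for k y
      using norm_le_grid_cell[OF assms(5) that] .
  qed simp
  also have "\<dots> \<le> ennreal ((DIM('a) / n) powr p + ?B * (\<Sum>k\<in>?I. \<bar>mass_P k - mass_Q k\<bar>))
        + ennreal (2 powr (p - 1)) * ((\<integral>\<^sup>+ y. tail_norm_powr p (K / n) y \<partial>?P)
          + (\<integral>\<^sup>+ y. tail_norm_powr p (K / n) y \<partial>\<mu>))"
    by (intro add_mono mult_left_mono nn_integral_mono outside_tail order_refl) simp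
  also have "\<dots> = ennreal ((DIM('a) / n) powr p)
      + (\<Sum>k\<in>?I. ennreal (?B * \<bar>mass_P k - mass_Q k\<bar>))
      + ennreal (2 powr (p - 1)) * ((\<Sum>j\<in>{1..N}. tail_norm_powr p (K / n) (x j)) / of_nat N)
      + ennreal (2 powr (p - 1)) * (\<integral>\<^sup>+ y. tail_norm_powr p (K / n) y \<partial>\<mu>)"
    using assms(4)
    by (simp add: nn_integral_empirical_measure sum_nonneg sum_distrib_left distrib_left add.assoc)
  finally show ?thesis
    using assms(4) by (simp add: mass_P_def mass_Q_def measure_empirical_measure)
qed

lemma nn_integral_empirical_average:
  assumes "N \<ge> 1" and [measurable]: "\<And>k. X k \<in> borel_measurable M"
    and distr: "\<And>k. distr M borel (X k) = \<mu>" and [measurable]: "f \<in> borel_measurable borel"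
  shows "(\<integral>\<^sup>+ \<omega>. (\<Sum>j\<in>{1..N}. f (X j \<omega>)) / of_nat N \<partial>M) = (\<integral>\<^sup>+ y. f y \<partial>\<mu>)"
proof -
  have "(\<integral>\<^sup>+ \<omega>. f (X j \<omega>) \<partial>M) = (\<integral>\<^sup>+ y. f y \<partial>\<mu>)" for j
    unfolding distr[of j, symmetric] by (subst nn_integral_distr) auto
  then have "(\<integral>\<^sup>+ \<omega>. (\<Sum>j\<in>{1..N}. f (X j \<omega>)) / of_nat N \<partial>M)
      = (\<integral>\<^sup>+ y. f y \<partial>\<mu>) * of_nat N / of_nat N"
    by (simp add: nn_integral_divide nn_integral_sum mult.commute)
  also have "\<dots> = (\<integral>\<^sup>+ y. f y \<partial>\<mu>)"
    using assms(1) by (intro ennreal_mult_divide_eq) auto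
  finally show ?thesis .
qed

lemma expected_wasserstein_pow_empirical_measure_le_grid:
  fixes M :: "'b measure" and X :: "nat \<Rightarrow> 'b \<Rightarrow> 'a::euclidean_space" and \<mu> :: "'a measure"
    and N n K :: nat
  assumes "prob_space M" and "prob_space \<mu>" and "sets \<mu> = sets borel" and "p \<ge> 1"
    and [measurable]: "\<And>k. X k \<in> borel_measurable M"
    and indep: "prob_space.indep_vars M (\<lambda>_. borel) X UNIV"
    and distr: "\<And>k. distr M borel (X k) = \<mu>" and "N \<ge> 1" and "n \<ge> 1"
  shows "(\<integral>\<^sup>+ \<omega>. wasserstein_pow p (empirical_measure (\<lambda>k. X k \<omega>) N) \<mu> \<partial>M)
    \<le> ennreal ((DIM('a) / n) powr p
        + 2 powr (p - 1) * (DIM('a) * real K / n) powr p * real ((2 * K) ^ DIM('a)) / sqrt N)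
      + ennreal (2 powr p) * (\<integral>\<^sup>+ y. tail_norm_powr p (K / n) y \<partial>\<mu>)"
proof -
  interpret M: prob_space M by fact
  let ?I = "grid_index K :: ('a \<Rightarrow> int) set"
  define B where "B = 2 powr (p - 1) * (DIM('a) * real K / n) powr p"
  define c where "c = 2 powr (p - 1)"
  define T where "T = (\<integral>\<^sup>+ y. tail_norm_powr p (K / n) y \<partial>\<mu>)"
  define dev where "dev k \<omega> = \<bar>(\<Sum>j\<in>{1..N}. indicator (grid_cell n k) (X j \<omega>)) / real N
    - measure \<mu> (grid_cell n k)\<bar>" for k \<omega>
  have [measurable]: "(\<lambda>\<omega>. dev k \<omega>) \<in> borel_measurable M" for k unfolding dev_def by measurable
  have B: "B \<ge> 0" by (simp add: B_def)
  have expected_dev: "(\<integral>\<^sup>+ \<omega>. ennreal (B * dev k \<omega>) \<partial>M) \<le> ennreal (B / sqrt N)" for k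
  proof -
    have "(\<integral>\<^sup>+ \<omega>. ennreal (B * dev k \<omega>) \<partial>M) = ennreal B * (\<integral>\<^sup>+ \<omega>. ennreal (dev k \<omega>) \<partial>M)"
      using B by (simp add: ennreal_mult nn_integral_cmult dev_def)
    also have "\<dots> \<le> ennreal B * ennreal (1 / sqrt N)"
      unfolding dev_def
      by (intro mult_left_mono M.expected_empirical_frequency_deviation indep distr assms(8)) auto
    finally show ?thesis using B by (simp add: ennreal_mult[symmetric])
  qed
  have "(\<integral>\<^sup>+ \<omega>. wasserstein_pow p (empirical_measure (\<lambda>k. X k \<omega>) N) \<mu> \<partial>M)
      \<le> (\<integral>\<^sup>+ \<omega>. ennreal ((DIM('a) / n) powr p) + (\<Sum>k\<in>?I. ennreal (B * dev k \<omega>))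
        + ennreal c * ((\<Sum>j\<in>{1..N}. tail_norm_powr p (K / n) (X j \<omega>)) / of_nat N)
        + ennreal c * T \<partial>M)"
    unfolding B_def c_def T_def dev_def
    by (intro nn_integral_mono wasserstein_pow_empirical_measure_le_grid assms(2-4,8,9))
  also have "\<dots> = ennreal ((DIM('a) / n) powr p) + (\<Sum>k\<in>?I. \<integral>\<^sup>+ \<omega>. ennreal (B * dev k \<omega>) \<partial>M)
      + ennreal c * T + ennreal c * T"
    using nn_integral_empirical_average[OF assms(8,5) distr, of "tail_norm_powr p (K / n)"]
    by (simp add: nn_integral_add nn_integral_sum nn_integral_cmult M.emeasure_space_1 T_def)
  also have "\<dots> \<le> ennreal ((DIM('a) / n) powr p) + (\<Sum>k\<in>?I. ennreal (B / sqrt N))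
      + ennreal c * T + ennreal c * T"
    by (intro add_mono order_refl sum_mono expected_dev)
  also have "\<dots> = ennreal ((DIM('a) / n) powr p + B * real ((2 * K) ^ DIM('a)) / sqrt N)
      + ennreal (2 powr p) * T"
  proof -
    have "c + c = 2 powr p" using \<open>p \<ge> 1\<close> by (simp add: c_def powr_diff)
    then have "ennreal c + ennreal c = ennreal (2 powr p)"
      by (simp add: ennreal_plus[symmetric] c_def del: ennreal_plus)
    then have "ennreal c * T + ennreal c * T = ennreal (2 powr p) * T"
      by (simp add: distrib_right[symmetric])
    moreover have "(\<Sum>k\<in>?I. ennreal (B / sqrt N)) = ennreal (B * real ((2 * K) ^ DIM('a)) / sqrt N)"
      using B by (simp add: card_grid_index ennreal_of_nat_eq_real_of_nat ennreal_mult[symmetric])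
    ultimately show ?thesis using B by (simp add: add.assoc)
  qed
  finally show ?thesis by (simp add: B_def T_def mult.assoc)
qed

section \<open>Choice of the grid and asymptotics\<close>

lemma nn_integral_tail_norm_powr_le:
  fixes \<mu> :: "'a::euclidean_space measure"
  assumes "sets \<mu> = sets borel" and "\<alpha> > 0" and "R > 0" and "r \<ge> R"
    and finite: "(\<integral>\<^sup>+ x. ennreal (norm x powr p * (ln (1 + norm x)) powr \<alpha>) \<partial>\<mu>) < \<infinity>"
  shows "(\<integral>\<^sup>+ x. tail_norm_powr p r x \<partial>\<mu>)
    \<le> ennreal ((\<integral>x. norm x powr p * (ln (1 + norm x)) powr \<alpha> \<partial>\<mu>) / (ln (1 + R)) powr \<alpha>)"
proof -
  define F where "F x = norm x powr p * (ln (1 + norm x)) powr \<alpha>" for x :: 'a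
  define L where "L = (ln (1 + R)) powr \<alpha>"
  have L: "L > 0" using assms(3) by (simp add: L_def)
  have [measurable]: "F \<in> borel_measurable \<mu>"
    unfolding F_def measurable_cong_sets[OF assms(1) refl] by measurable
  have F_nonneg: "F x \<ge> 0" for x by (simp add: F_def)
  have integrable: "integrable \<mu> F"
    by (rule integrableI_bounded) (use finite in \<open>auto simp: F_def\<close>)
  \<comment> \<open>Markov's inequality for the logarithmic weight\<close>
  have pointwise: "indicator {x. r \<le> norm x} x * norm x powr p \<le> F x / L" for x
  proof (cases "r \<le> norm x")
    case True
    then have "L \<le> (ln (1 + norm x)) powr \<alpha>"
      unfolding L_def using assms(2-4) by (intro powr_mono2) auto
    then have "norm x powr p * 1 \<le> norm x powr p * ((ln (1 + norm x)) powr \<alpha> / L)"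
      using L by (intro mult_left_mono) auto
    then show ?thesis using True by (simp add: F_def)
  qed (use L in \<open>simp add: F_def\<close>)
  have "(\<integral>\<^sup>+ x. tail_norm_powr p r x \<partial>\<mu>) \<le> (\<integral>\<^sup>+ x. ennreal (F x / L) \<partial>\<mu>)"
    unfolding tail_norm_powr_def by (intro nn_integral_mono ennreal_leI pointwise)
  also have "\<dots> = ennreal (\<integral>x. F x / L \<partial>\<mu>)"
    using integrable L by (intro nn_integral_eq_integral integrable_divide_zero) (auto simp: F_nonneg)
  finally show ?thesis by (simp add: F_def L_def)
qed

lemma nat_ceiling_bounds:
  fixes t :: real
  assumes "t \<ge> 1"
  shows "t \<le> real (nat \<lceil>t\<rceil>)" and "real (nat \<lceil>t\<rceil>) \<le> 2 * t"
  using assms by linarith+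

lemma grid_mesh_term_le:
  fixes N n :: nat and d p c :: real
  assumes "N \<ge> 1" and "d \<ge> 0" and "p \<ge> 0" and "c > 0" and n: "n = nat \<lceil>real N powr c\<rceil>"
  shows "(d / n) powr p \<le> d powr p * real N powr (- (c * p))"
proof -
  define t where "t = real N powr c"
  have t: "t \<ge> 1" unfolding t_def using assms(1,4) by (simp add: ge_one_powr_ge_zero)
  have "t \<le> real n" using nat_ceiling_bounds[OF t] by (simp add: n t_def)
  then have "(d / n) powr p \<le> (d / t) powr p"
    using t assms(2,3) by (intro powr_mono2 divide_left_mono) auto
  also have "\<dots> = d powr p * t powr (- p)"
    using t assms(2) by (subst powr_divide) (auto simp: powr_minus_divide)
  also have "t powr (- p) = real N powr (- (c * p))"
    unfolding t_def by (simp add: powr_powr)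
  finally show ?thesis .
qed

lemma grid_count_term_le:
  fixes N n K D :: nat and d p \<gamma> c :: real
  assumes "N \<ge> 1" and "d = real D" and "p \<ge> 0" and "\<gamma> > 0" and "c > 0"
    and n: "n = nat \<lceil>real N powr c\<rceil>" and K: "K = nat \<lceil>real N powr \<gamma> * real n\<rceil>"
  shows "2 powr (p - 1) * (d * K / n) powr p * real ((2 * K) ^ D) / sqrt N
    \<le> 2 powr (p - 1) * (2 * d) powr p * 8 powr d * real N powr (\<gamma> * p + (\<gamma> + c) * d - 1 / 2)"
proof -
  define t where "t = real N powr c"
  define R where "R = real N powr \<gamma>"
  have N: "real N \<ge> 1" using assms(1) by simp
  have t: "t \<ge> 1" unfolding t_def using N assms(5) by (simp add: ge_one_powr_ge_zero)
  have R: "R \<ge> 1" unfolding R_def using N assms(4) by (simp add: ge_one_powr_ge_zero)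
  have d: "d \<ge> 0" using assms(2) by simp
  have n_bounds: "t \<le> real n" "real n \<le> 2 * t"
    using nat_ceiling_bounds[OF t] by (simp_all add: n t_def)
  have "R * n \<ge> 1" using R n_bounds t by (metis mult_mono' mult_1 order.trans zero_le_one)
  then have K_bounds: "R * n \<le> real K" "real K \<le> 2 * R * n"
    using nat_ceiling_bounds[of "R * n"] by (simp_all add: K R_def)
  have side: "(d * K / n) powr p \<le> (2 * d) powr p * real N powr (\<gamma> * p)"
  proof -
    have "d * K \<le> d * (2 * R * n)" using K_bounds d by (intro mult_left_mono) auto
    then have "d * K / n \<le> 2 * d * R" using n_bounds t by (simp add: field_simps)
    then have "(d * K / n) powr p \<le> (2 * d * R) powr p" using assms(3) d by (intro powr_mono2) auto
    also have "\<dots> = (2 * d) powr p * real N powr (\<gamma> * p)"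
      using d R by (simp add: powr_mult R_def powr_powr)
    finally show ?thesis .
  qed
  have count: "real ((2 * K) ^ D) \<le> 8 powr d * real N powr ((\<gamma> + c) * d)"
  proof -
    have "2 * real K \<le> 4 * R * n" using K_bounds by simp
    also have "\<dots> \<le> 4 * R * (2 * t)" using n_bounds R by (intro mult_left_mono) auto
    finally have "2 * real K \<le> 8 * R * t" by simp
    have "real ((2 * K) ^ D) = (2 * real K) ^ D" by simp
    also have "\<dots> \<le> (8 * R * t) ^ D"
      by (rule power_mono) (use \<open>2 * real K \<le> 8 * R * t\<close> in simp_all)
    also have "\<dots> = 8 powr d * (R powr d * t powr d)"
      using R t assms(2) by (simp add: powr_realpow[symmetric] powr_mult)
    also have "R powr d * t powr d = real N powr ((\<gamma> + c) * d)"
      unfolding R_def t_def by (simp add: powr_powr powr_add[symmetric] distrib_right)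
    finally show ?thesis by simp
  qed
  have "1 / sqrt N = real N powr (- 1 / 2)"
    using N by (simp add: powr_minus_divide powr_half_sqrt[symmetric])
  then have "2 powr (p - 1) * (d * K / n) powr p * real ((2 * K) ^ D) / sqrt N
      = 2 powr (p - 1) * ((d * K / n) powr p * real ((2 * K) ^ D)) * real N powr (- 1 / 2)"
    by (metis (no_types, lifting) mult.assoc times_divide_eq_right mult_1_right)
  also have "\<dots> \<le> 2 powr (p - 1) * (((2 * d) powr p * real N powr (\<gamma> * p))
      * (8 powr d * real N powr ((\<gamma> + c) * d))) * real N powr (- 1 / 2)"
    by (intro mult_right_mono mult_left_mono mult_mono side count) auto
  also have "\<dots> = 2 powr (p - 1) * (2 * d) powr p * 8 powr d
      * (real N powr (\<gamma> * p) * real N powr ((\<gamma> + c) * d) * real N powr (- 1 / 2))"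
    by (simp add: ac_simps)
  also have "real N powr (\<gamma> * p) * real N powr ((\<gamma> + c) * d) * real N powr (- 1 / 2)
      = real N powr (\<gamma> * p + (\<gamma> + c) * d - 1 / 2)"
    using N by (simp add: powr_add[symmetric])
  finally show ?thesis .
qed

lemma powr_smallo_inverse_ln_powr:
  fixes e \<gamma> \<alpha> C :: real
  assumes "e > 0" and "\<gamma> > 0" and "\<alpha> > 0"
  shows "(\<lambda>N::nat. C * real N powr (- e)) \<in> o(\<lambda>N. 1 / (ln (1 + real N powr \<gamma>)) powr \<alpha>)"
proof (rule smalloI_tendsto)
  have "(\<lambda>N::nat. real N powr (- e) * ln (1 + real N powr \<gamma>) powr \<alpha>) \<longlonglongrightarrow> 0"
    using assms by real_asymp
  then have "(\<lambda>N::nat. C * (real N powr (- e) * ln (1 + real N powr \<gamma>) powr \<alpha>)) \<longlonglongrightarrow> C * 0"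
    by (intro tendsto_mult tendsto_const)
  then show "(\<lambda>N::nat. C * real N powr (- e) / (1 / (ln (1 + real N powr \<gamma>)) powr \<alpha>)) \<longlonglongrightarrow> 0"
    by (simp add: mult.assoc)
  show "\<forall>\<^sub>F N in sequentially. 1 / (ln (1 + real N powr \<gamma>)) powr \<alpha> \<noteq> 0"
  proof (rule eventually_sequentiallyI[of 1])
    fix N :: nat assume "N \<ge> 1"
    then have "ln (1 + real N powr \<gamma>) > 0" by (intro ln_gt_zero) simp
    then show "1 / (ln (1 + real N powr \<gamma>)) powr \<alpha> \<noteq> 0" by simp
  qed
qed

lemma expected_wasserstein_pow_empirical_measure_le_powr:
  fixes M :: "'b measure" and X :: "nat \<Rightarrow> 'b \<Rightarrow> 'a::euclidean_space" and \<mu> :: "'a measure"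
    and p \<alpha> \<gamma> c :: real and N :: nat
  assumes "prob_space M" and "prob_space \<mu>" and "sets \<mu> = sets borel"
    and "p \<ge> 1" and "\<alpha> > 0" and "\<gamma> > 0" and "c > 0"
    and "(\<integral>\<^sup>+ x. ennreal (norm x powr p * (ln (1 + norm x)) powr \<alpha>) \<partial>\<mu>) < \<infinity>"
    and "\<And>k. X k \<in> borel_measurable M"
    and "prob_space.indep_vars M (\<lambda>_. borel) X UNIV"
    and "\<And>k. distr M borel (X k) = \<mu>" and N: "N \<ge> 1"
  shows "(\<integral>\<^sup>+ \<omega>. wasserstein_pow p (empirical_measure (\<lambda>k. X k \<omega>) N) \<mu> \<partial>M)
    \<le> ennreal (2 powr p * (\<integral>x. norm x powr p * (ln (1 + norm x)) powr \<alpha> \<partial>\<mu>)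
                  / (ln (1 + real N powr \<gamma>)) powr \<alpha>
        + DIM('a) powr p * real N powr (- (c * p))
        + 2 powr (p - 1) * (2 * DIM('a)) powr p * 8 powr DIM('a)
          * real N powr (\<gamma> * p + (\<gamma> + c) * DIM('a) - 1 / 2))"
proof -
  define d where "d = real DIM('a)"
  define m where "m = (\<integral>x. norm x powr p * (ln (1 + norm x)) powr \<alpha> \<partial>\<mu>)"
  define L where "L = (ln (1 + real N powr \<gamma>)) powr \<alpha>"
  define n where "n = nat \<lceil>real N powr c\<rceil>"
  define K where "K = nat \<lceil>real N powr \<gamma> * real n\<rceil>"
  define R where "R = real N powr \<gamma>"
  have m: "m \<ge> 0" unfolding m_def by (intro integral_nonneg_AE) auto
  have R: "R \<ge> 1" unfolding R_def using N assms(6) by (simp add: ge_one_powr_ge_zero)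
  have n: "n \<ge> 1" using N assms(7) ge_one_powr_ge_zero[of "real N" c] unfolding n_def by linarith
  have KR: "R \<le> real K / real n" using n by (simp add: K_def R_def field_simps)
  have L: "L > 0" using R by (simp add: L_def R_def[symmetric])
  have "(\<integral>\<^sup>+ \<omega>. wasserstein_pow p (empirical_measure (\<lambda>k. X k \<omega>) N) \<mu> \<partial>M)
      \<le> ennreal ((d / n) powr p
          + 2 powr (p - 1) * (d * K / n) powr p * real ((2 * K) ^ DIM('a)) / sqrt N)
        + ennreal (2 powr p) * (\<integral>\<^sup>+ y. tail_norm_powr p (K / n) y \<partial>\<mu>)"
    unfolding d_def
    by (rule expected_wasserstein_pow_empirical_measure_le_grid[OF assms(1-4,9-11) N n])
  also have "\<dots> \<le> ennreal (d powr p * real N powr (- (c * p))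
        + 2 powr (p - 1) * (2 * d) powr p * 8 powr d * real N powr (\<gamma> * p + (\<gamma> + c) * d - 1 / 2))
      + ennreal (2 powr p) * ennreal (m / L)"
  proof (intro add_mono mult_left_mono ennreal_leI order_refl)
    show "(\<integral>\<^sup>+ y. tail_norm_powr p (K / n) y \<partial>\<mu>) \<le> ennreal (m / L)"
      using nn_integral_tail_norm_powr_le[OF assms(3,5) _ KR assms(8)] R N
      by (simp add: m_def L_def R_def)
  qed (use grid_mesh_term_le[OF N _ _ assms(7) n_def, of d p]
         grid_count_term_le[OF N d_def _ assms(6,7) n_def K_def, of p] assms(4) in
       \<open>auto simp: d_def\<close>)
  also have "\<dots> = ennreal (2 powr p * m / L + d powr p * real N powr (- (c * p))
        + 2 powr (p - 1) * (2 * d) powr p * 8 powr d * real N powr (\<gamma> * p + (\<gamma> + c) * d - 1 / 2))"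
    using m L by (simp add: ennreal_mult[symmetric] ennreal_plus[symmetric] add_ac del: ennreal_plus)
  finally show ?thesis by (simp add: d_def m_def L_def)
qed

lemma expected_wasserstein_pow_empirical_measure_asymp:
  fixes M :: "'b measure" and X :: "nat \<Rightarrow> 'b \<Rightarrow> 'a::euclidean_space" and \<mu> :: "'a measure"
    and p \<alpha> \<gamma> :: real
  assumes "prob_space M" and "prob_space \<mu>" and "sets \<mu> = sets borel"
    and "p \<ge> 1" and "\<alpha> > 0" and "\<gamma> > 0" and "\<gamma> * (p + DIM('a)) < 1 / 2"
    and "(\<integral>\<^sup>+ x. ennreal (norm x powr p * (ln (1 + norm x)) powr \<alpha>) \<partial>\<mu>) < \<infinity>"
    and "\<And>k. X k \<in> borel_measurable M"
    and "prob_space.indep_vars M (\<lambda>_. borel) X UNIV"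
    and "\<And>k. distr M borel (X k) = \<mu>"
  shows "\<exists>g :: nat \<Rightarrow> real. g \<in> o(\<lambda>N. 1 / (ln (1 + real N powr \<gamma>)) powr \<alpha>) \<and>
    (\<forall>\<^sub>F N in sequentially.
      (\<integral>\<^sup>+ \<omega>. wasserstein_pow p (empirical_measure (\<lambda>k. X k \<omega>) N) \<mu> \<partial>M)
        \<le> ennreal (2 powr p * (\<integral>x. norm x powr p * (ln (1 + norm x)) powr \<alpha> \<partial>\<mu>)
                    / (ln (1 + real N powr \<gamma>)) powr \<alpha> + g N))"
proof -
  define d where "d = real DIM('a)"
  define \<delta> where "\<delta> = 1 / 2 - \<gamma> * (p + d)"
  \<comment> \<open>With cells of side about \<open>N powr - c\<close> covering the cube of radius \<open>N powr \<gamma>\<close>, the number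
    of cells times the \<open>p\<close>-th power of the radius is about \<open>N powr (1 / 2 - \<delta> / 2)\<close>, so the
    fluctuations \<open>1 / sqrt N\<close> of the cells contribute \<open>N powr (- \<delta> / 2)\<close>.\<close>
  define c where "c = \<delta> / (2 * d)"
  have d: "d \<ge> 1" by (simp add: d_def DIM_positive Suc_le_eq)
  have \<delta>: "\<delta> > 0" using assms(7) by (simp add: \<delta>_def d_def)
  have c: "c > 0" using \<delta> d by (simp add: c_def)
  have exponent: "\<gamma> * p + (\<gamma> + c) * d - 1 / 2 = - (\<delta> / 2)"
    using d by (simp add: c_def \<delta>_def field_simps)
  define g where "g N = d powr p * real N powr (- (c * p))
    + 2 powr (p - 1) * (2 * d) powr p * 8 powr d * real N powr (- (\<delta> / 2))" for N :: nat
  have "g \<in> o(\<lambda>N. 1 / (ln (1 + real N powr \<gamma>)) powr \<alpha>)"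
    unfolding g_def using c \<delta> assms(4-6) by (intro sum_in_smallo powr_smallo_inverse_ln_powr) auto
  moreover have "\<forall>\<^sub>F N in sequentially.
      (\<integral>\<^sup>+ \<omega>. wasserstein_pow p (empirical_measure (\<lambda>k. X k \<omega>) N) \<mu> \<partial>M)
        \<le> ennreal (2 powr p * (\<integral>x. norm x powr p * (ln (1 + norm x)) powr \<alpha> \<partial>\<mu>)
                    / (ln (1 + real N powr \<gamma>)) powr \<alpha> + g N)"
    using expected_wasserstein_pow_empirical_measure_le_powr[OF assms(1-6) c assms(8-11)]
    unfolding exponent[unfolded d_def] by (auto simp: g_def d_def add.assoc intro: eventually_sequentiallyI)
  ultimately show ?thesis by blast
qed

theorem corollary3p5:
  fixes M :: "'b measure" and X :: "nat \<Rightarrow> 'b \<Rightarrow> 'a::euclidean_space"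
    and \<mu> :: "'a measure" and p \<alpha> \<epsilon> :: real
  assumes "prob_space M"
    and "prob_space \<mu>" and "sets \<mu> = sets borel"
    and "p \<ge> 1" and "\<alpha> > 0" and "\<epsilon> > 0"
    and "(\<integral>\<^sup>+ x. ennreal (norm x powr p * (ln (1 + norm x)) powr \<alpha>) \<partial>\<mu>) < \<infinity>"
    and "\<And>k. X k \<in> borel_measurable M"
    and "prob_space.indep_vars M (\<lambda>_. borel) X UNIV"
    and "\<And>k. distr M borel (X k) = \<mu>"
  shows "let d = real DIM('a);
             \<gamma> = p / (2 * (p + \<epsilon>) * (p + d));
             Cpd = 2 powr (3/2) * (Gamma ((p + d) / 2) / Gamma (d / 2)) powr (1 / p);
             C = max (2 powr (p - 1) * Cpd powr p) (2 powr (3 * p - 2));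
             m = (\<integral>x. norm x powr p * (ln (1 + norm x)) powr \<alpha> \<partial>\<mu>);
             L = (\<lambda>N::nat. (ln (1 + real N powr \<gamma>)) powr \<alpha>)
         in \<exists>g :: nat \<Rightarrow> real. g \<in> o(\<lambda>N. 1 / L N) \<and>
              (\<forall>\<^sub>F N in sequentially.
                 (\<integral>\<^sup>+ \<omega>. wasserstein_pow p (empirical_measure (\<lambda>k. X k \<omega>) N) \<mu> \<partial>M)
                   \<le> ennreal (C * (1 + m) / L N + g N))"
proof -
  define d where "d = real DIM('a)"
  define \<gamma> where "\<gamma> = p / (2 * (p + \<epsilon>) * (p + d))"
  define C where "C = max (2 powr (p - 1) * (2 powr (3/2)
    * (Gamma ((p + d) / 2) / Gamma (d / 2)) powr (1 / p)) powr p) (2 powr (3 * p - 2))"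
  define m where "m = (\<integral>x. norm x powr p * (ln (1 + norm x)) powr \<alpha> \<partial>\<mu>)"
  define L where "L N = (ln (1 + real N powr \<gamma>)) powr \<alpha>" for N :: nat
  have d: "d > 0" by (simp add: d_def)
  have "\<gamma> * (p + d) = 1 / 2 * (p / (p + \<epsilon>))" using d assms(4) by (simp add: \<gamma>_def)
  also have "\<dots> < 1 / 2" using assms(4,6) by simp
  finally obtain g where g: "g \<in> o(\<lambda>N. 1 / L N)"
    and bound: "\<forall>\<^sub>F N in sequentially.
      (\<integral>\<^sup>+ \<omega>. wasserstein_pow p (empirical_measure (\<lambda>k. X k \<omega>) N) \<mu> \<partial>M) \<le> ennreal (2 powr p * m / L N + g N)"
    using expected_wasserstein_pow_empirical_measure_asymp[OF assms(1-5) _ _ assms(7-10), of \<gamma>]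
      d assms(4,6) by (auto simp: d_def \<gamma>_def m_def L_def)
  \<comment> \<open>only \<open>C \<ge> 2 powr p\<close> matters\<close>
  have "2 powr p \<le> C" using assms(4) by (simp add: C_def le_max_iff_disj)
  moreover from this have "0 \<le> C" by (rule order_trans[rotated]) simp
  moreover have "m \<ge> 0" "L N \<ge> 0" for N unfolding m_def L_def by (auto intro!: integral_nonneg_AE)
  ultimately have C_bound: "2 powr p * m / L N \<le> C * (1 + m) / L N" for N
    by (intro divide_right_mono mult_mono) auto
  from bound have "\<forall>\<^sub>F N in sequentially.
      (\<integral>\<^sup>+ \<omega>. wasserstein_pow p (empirical_measure (\<lambda>k. X k \<omega>) N) \<mu> \<partial>M) \<le> ennreal (C * (1 + m) / L N + g N)"
    by eventually_elim (erule order_trans, intro ennreal_leI add_right_mono C_bound)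
  with g show ?thesis by (auto simp: Let_def d_def \<gamma>_def C_def m_def L_def)
qed

end
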